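(* Let $1\le\ell<L/2$. Among hard-core configurations $\sigma$ with real area $\tilde n(\sigma)=2\ell^2+2\ell+1$, those of minimal perimeter $P(\sigma)$ are exactly those whose odd region consists of a unique odd cluster, and this cluster is the rhombus $\mathcal{R}_{\ell,\ell}$. In particular, for $\tilde n=\frac{L^2}{2}-L+1$ this rhombus is $\mathcal{R}_{\frac L2-1,\frac L2-1}$.
   Context: $L\ge6$ even; $\Lambda=(V,E)$ is the $L\times L$ toric grid graph ($V=\{0,\dots,L-1\}^2$, adjacency = difference $\pm1$ mod $L$ in exactly one coordinate), even/odd sites $V_{\mathrm{e}},V_{\mathrm{o}}$ by parity of the coordinate sum. Hard-core configurations: $\mathcal{X}=\{\sigma\in\{0,1\}^V:\sigma(v)\sigma(w)=0$ for adjacent $v,w\}$. For $S\subseteq V$: $\partial^+S$ = sites outside $S$ adjacent to $S$; $\nabla S$ = edges between $S$ and $\partial^+S$; $P(S)=|\nabla S|$. An odd cluster is $C\subseteq V$ such that every odd site of $C$ has its four neighbours in $C$ and $C\cap V_{\mathrm{e}}$ is connected in the graph on $V_{\mathrm{e}}$ joining even sites at distance 2. The odd region of $\sigma$ is $\mathcal{O}(\sigma)=\{v\in V_{\mathrm{o}}:\sigma(v)=1\}\cup\{v\in V_{\mathrm{e}}:\sigma(v)=0\}$, the disjoint union of its connected components $C_1,\dots,C_m$ (odd clusters); the perimeter of $\sigma$ is $P(\sigma)=\sum_iP(C_i)$. The real area of $\sigma$ is $\tilde n(\sigma)=o(\sigma)+\tilde e(\sigma)$, where $o(\sigma)$ is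 the number of occupied odd sites and $\tilde e(\sigma)$ the number of empty even sites. For $\eta\in V_{\mathrm{o}}$, the rhombus $\mathcal{R}_{\ell_1,\ell_2}(\eta)=S\cup\partial^+S$ with $S=\{(\eta_1+k+j,\eta_2+k-j):0\le k<\ell_1,0\le j<\ell_2\}$ (mod $L$). *)

theory Defs
  imports Main
begin

type_synonym site = "nat \<times> nat"

definition sites :: "nat \<Rightarrow> site set" where
  "sites L = {0..<L} \<times> {0..<L}"

definition even_sites :: "nat \<Rightarrow> site set" where
  "even_sites L = {v \<in> sites L. even (fst v + snd v)}"

definition odd_sites :: "nat \<Rightarrow> site set" where
  "odd_sites L = {v \<in> sites L. odd (fst v + snd v)}"

definition adj :: "nat \<Rightarrow> site \<Rightarrow> site \<Rightarrow> bool" where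
  "adj L v w \<longleftrightarrow> v \<in> sites L \<and> w \<in> sites L \<and>
     ((fst v = fst w \<and> (snd w = (snd v + 1) mod L \<or> snd v = (snd w + 1) mod L)) \<or>
      (snd v = snd w \<and> (fst w = (fst v + 1) mod L \<or> fst v = (fst w + 1) mod L)))"

text \<open>Hard-core configurations (sigma v = True means occupied; canonically False off the torus).\<close>
definition hardcore :: "nat \<Rightarrow> (site \<Rightarrow> bool) set" where
  "hardcore L = {\<sigma>. (\<forall>v. \<sigma> v \<longrightarrow> v \<in> sites L) \<and>
                     (\<forall>v w. adj L v w \<longrightarrow> \<not> (\<sigma> v \<and> \<sigma> w))}"

definition ext_boundary :: "nat \<Rightarrow> site set \<Rightarrow> site set" where
  "ext_boundary L S = {w \<in> sites L - S. \<exists>v\<in>S. adj L v w}"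

definition edge_boundary :: "nat \<Rightarrow> site set \<Rightarrow> (site \<times> site) set" where
  "edge_boundary L S = {(v, w). v \<in> S \<and> w \<in> ext_boundary L S \<and> adj L v w}"

definition perim :: "nat \<Rightarrow> site set \<Rightarrow> nat" where
  "perim L S = card (edge_boundary L S)"

definition odd_region :: "nat \<Rightarrow> (site \<Rightarrow> bool) \<Rightarrow> site set" where
  "odd_region L \<sigma> = {v \<in> odd_sites L. \<sigma> v} \<union> {v \<in> even_sites L. \<not> \<sigma> v}"

definition adj_within :: "nat \<Rightarrow> site set \<Rightarrow> (site \<times> site) set" where
  "adj_within L A = {(a, b). a \<in> A \<and> b \<in> A \<and> adj L a b}"

definition components :: "nat \<Rightarrow> site set \<Rightarrow> site set set" where
  "components L A = {{w \<in> A. (v, w) \<in> (adj_within L A)\<^sup>*} | v. v \<in> A}"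

definition perimeter :: "nat \<Rightarrow> (site \<Rightarrow> bool) \<Rightarrow> nat" where
  "perimeter L \<sigma> = (\<Sum>C\<in>components L (odd_region L \<sigma>). perim L C)"

definition real_area :: "nat \<Rightarrow> (site \<Rightarrow> bool) \<Rightarrow> nat" where
  "real_area L \<sigma> = card {v \<in> odd_sites L. \<sigma> v} + card {v \<in> even_sites L. \<not> \<sigma> v}"

definition rhombus_core :: "nat \<Rightarrow> nat \<Rightarrow> nat \<Rightarrow> site \<Rightarrow> site set" where
  "rhombus_core L l1 l2 \<eta> =
     {(nat ((int (fst \<eta>) + int k + int j) mod int L),
       nat ((int (snd \<eta>) + int k - int j) mod int L)) | k j. k < l1 \<and> j < l2}"

definition rhombus :: "nat \<Rightarrow> nat \<Rightarrow> nat \<Rightarrow> site \<Rightarrow> site set" where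
  "rhombus L l1 l2 \<eta> = rhombus_core L l1 l2 \<eta> \<union> ext_boundary L (rhombus_core L l1 l2 \<eta>)"

end

theory Submission
  imports Defs
begin

text \<open>
  In a hard-core configuration every edge leaving the odd region joins a vacant even site to a
  vacant odd site, and the remaining edges at vacant even sites go to occupied odd sites, four for
  each.  Hence P(sigma) = 4 (tilde e - o) = 4 tilde n - 8 o: at fixed real area, minimising the
  perimeter means maximising the number o of occupied odd sites.

  The occupied odd sites K and their outer boundary, which consists of vacant even sites, satisfy
  |K| + |boundary K| <= tilde n = 2 l^2 + 2 l + 1.  Counting both sets row by row on the torus,
  the row counts a_j of K and b_j of the boundary obey a_(j+1) <= b_j, a_j <= b_(j+1),
  a_j <= b_j, with b_j > a_j for non-empty rows that are not full.  A full row forces a boundary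
  of more than L^2/4 sites, which is too large; otherwise some boundary row is empty, and cutting
  the torus there, a one-dimensional counting argument shows sum a_j <= (C - 1)^2 / 4 where C is
  the total excess sum (b_j - a_j).  With |K| >= l^2 this forces |K| = l^2, C = 2 l + 1 and the
  row profile 1, 2, ..., l, ..., 2, 1 with boundary rows one longer; row by row such rows are
  forced to be the rows of a rhombus R_(l,l).  Since the rhombus configuration realises o = l^2,
  the minimisers are exactly the configurations whose odd region is R_(l,l).
\<close>

section \<open>Torus geometry\<close>

lemma Suc_mod_if: "x < L \<Longrightarrow> Suc x mod L = (if Suc x = L then 0 else Suc x)"
  by (cases "Suc x = L") auto

lemma pred_mod_if:
  assumes "x < L"
  shows "(x + L - Suc 0) mod L = (if x = 0 then L - 1 else x - 1)"
proof (cases "x = 0")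
  case False
  then have "(x + L - 1) mod L = (x - 1) mod L"
    by (metis Nat.add_diff_assoc2 less_one linorder_not_le mod_add_self2)
  then show ?thesis using assms False by simp
qed (use assms in simp)

lemma eq_Suc_mod_iff: "a < L \<Longrightarrow> x < L
    \<Longrightarrow> x = Suc a mod L \<longleftrightarrow> a = (x + L - Suc 0) mod L"
  by (auto simp: Suc_mod_if pred_mod_if)

lemma pred_mod_Suc_mod: "0 < L \<Longrightarrow> (Suc y mod L + L - 1) mod L = y mod L"
  using eq_Suc_mod_iff[of "y mod L" L "Suc y mod L"] by (simp add: mod_Suc_eq)

lemma finite_sites: "finite (sites L)"
  unfolding sites_def by simp

lemma adj_commute: "adj L v w \<longleftrightarrow> adj L w v"
  unfolding adj_def by auto

lemma adj_sites: "adj L v w \<Longrightarrow> v \<in> sites L \<and> w \<in> sites L"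
  unfolding adj_def by simp

lemma adj_iff:
  assumes "2 \<le> L"
  shows "adj L (x, y) w \<longleftrightarrow> x < L \<and> y < L \<and>
     w \<in> {(Suc x mod L, y), ((x + L - 1) mod L, y), (x, Suc y mod L), (x, (y + L - 1) mod L)}"
  (is "_ \<longleftrightarrow> ?rhs")
proof -
  obtain a b where w: "w = (a, b)" by fastforce
  show ?thesis
  proof
    assume "adj L (x, y) w"
    moreover from this have "x < L" "y < L" "a < L" "b < L" unfolding adj_def sites_def w by auto
    ultimately show ?rhs
      unfolding adj_def w using eq_Suc_mod_iff[of a L x] eq_Suc_mod_iff[of b L y] by auto
  next
    assume ?rhs
    moreover from this have "a < L" "b < L" unfolding w using assms by auto
    ultimately show "adj L (x, y) w"
      unfolding adj_def w sites_def using eq_Suc_mod_iff[of a L x] eq_Suc_mod_iff[of b L y] by auto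
  qed
qed

lemma card_neighbours:
  assumes "3 \<le> L" and "v \<in> sites L"
  shows "card {w. adj L v w} = 4"
proof -
  obtain x y where v: "v = (x, y)" and xy: "x < L" "y < L"
    using assms(2) unfolding sites_def by auto
  have nbrs: "{w. adj L v w}
      = {(Suc x mod L, y), ((x + L - 1) mod L, y), (x, Suc y mod L), (x, (y + L - 1) mod L)}"
    using adj_iff[of L x y] assms(1) xy unfolding v by auto
  have "Suc z mod L \<noteq> (z + L - 1) mod L" "Suc z mod L \<noteq> z" "(z + L - 1) mod L \<noteq> z"
    if "z < L" for z
    using that assms(1) by (auto simp: Suc_mod_if pred_mod_if)
  then show ?thesis unfolding nbrs using xy by auto
qed

lemma finite_neighbours: "finite {w. adj L v w}"
  using adj_sites by (blast intro: finite_subset[OF _ finite_sites])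

lemma even_mod_iff:
  fixes a L :: "'a::{semidom_modulo, semiring_parity}"
  assumes "even L"
  shows "even (a mod L) \<longleftrightarrow> even a"
  by (rule dvd_mod_iff[OF assms])

lemma even_Suc_mod_iff: "even L \<Longrightarrow> even (Suc x mod L) \<longleftrightarrow> odd x"
  using even_mod_iff[of L "Suc x"] by simp

lemma even_pred_mod_iff: "even L \<Longrightarrow> 0 < L
    \<Longrightarrow> even ((x + L - Suc 0) mod L) \<longleftrightarrow> odd x"
  using even_mod_iff[of L "x + L - Suc 0"] by auto

lemma adj_odd_iff_even:
  assumes "even L" "2 \<le> L" "adj L v w"
  shows "v \<in> odd_sites L \<longleftrightarrow> w \<in> even_sites L"
proof -
  obtain x y where v: "v = (x, y)" by fastforce
  have "w = (Suc x mod L, y) \<or> w = ((x + L - 1) mod L, y) \<or> w = (x, Suc y mod L)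
      \<or> w = (x, (y + L - 1) mod L)"
    using assms(3) adj_iff[OF assms(2), of x y w] unfolding v by simp
  then have "odd (x + y) \<longleftrightarrow> even (fst w + snd w)"
  proof (elim disjE)
    show "odd (x + y) \<longleftrightarrow> even (fst w + snd w)" if "w = (Suc x mod L, y)"
      using that even_Suc_mod_iff[OF assms(1), of x] by auto
    show "odd (x + y) \<longleftrightarrow> even (fst w + snd w)" if "w = ((x + L - 1) mod L, y)"
      using that even_pred_mod_iff[OF assms(1), of x] assms(2) by auto
    show "odd (x + y) \<longleftrightarrow> even (fst w + snd w)" if "w = (x, Suc y mod L)"
      using that even_Suc_mod_iff[OF assms(1), of y] by auto
    show "odd (x + y) \<longleftrightarrow> even (fst w + snd w)" if "w = (x, (y + L - 1) mod L)"
      using that even_pred_mod_iff[OF assms(1), of y] assms(2) by auto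
  qed
  then show ?thesis
    using adj_sites[OF assms(3)] unfolding v odd_sites_def even_sites_def by auto
qed

lemma adj_even_iff_odd:
  assumes "even L" "2 \<le> L" "adj L v w"
  shows "v \<in> even_sites L \<longleftrightarrow> w \<in> odd_sites L"
  using adj_odd_iff_even[OF assms(1,2)] assms(3) adj_commute by metis

lemma odd_sites_Int_even_sites: "odd_sites L \<inter> even_sites L = {}"
  unfolding odd_sites_def even_sites_def by auto

lemma ext_boundary_memI:
  assumes "even L" "2 \<le> L" "K \<subseteq> odd_sites L" "v \<in> K" "adj L v w"
  shows "w \<in> ext_boundary L K"
proof -
  have "w \<in> even_sites L" using adj_odd_iff_even[OF assms(1,2,5)] assms(3,4) by auto
  then have "w \<notin> K" using assms(3) odd_sites_Int_even_sites by blast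
  then show ?thesis unfolding ext_boundary_def using adj_sites[OF assms(5)] assms(4,5) by auto
qed

lemma ext_boundary_subset_even_sites:
  assumes "even L" "2 \<le> L" "K \<subseteq> odd_sites L"
  shows "ext_boundary L K \<subseteq> even_sites L"
  using adj_odd_iff_even[OF assms(1,2)] assms(3) unfolding ext_boundary_def by blast

section \<open>Connected components and perimeter\<close>

lemma sym_rtrancl_adj_within: "sym ((adj_within L A)\<^sup>*)"
  by (rule sym_rtrancl) (auto simp: sym_def adj_within_def adj_commute)

lemma components_memE:
  assumes "C \<in> components L A"
  obtains v where "v \<in> A" "C = {w \<in> A. (v, w) \<in> (adj_within L A)\<^sup>*}"
  using assms unfolding components_def by auto

lemma components_subset: "C \<in> components L A \<Longrightarrow> C \<subseteq> A"
  by (auto elim: components_memE)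

lemma components_disjoint:
  assumes "C1 \<in> components L A" "C2 \<in> components L A" "C1 \<noteq> C2"
  shows "C1 \<inter> C2 = {}"
proof (rule ccontr)
  let ?R = "(adj_within L A)\<^sup>*"
  assume "C1 \<inter> C2 \<noteq> {}"
  then obtain w where w: "w \<in> C1" "w \<in> C2" by blast
  obtain v1 where C1: "C1 = {w \<in> A. (v1, w) \<in> ?R}" using assms(1) by (rule components_memE)
  obtain v2 where C2: "C2 = {w \<in> A. (v2, w) \<in> ?R}" using assms(2) by (rule components_memE)
  have "(w, v1) \<in> ?R" "(w, v2) \<in> ?R"
    using w C1 C2 symD[OF sym_rtrancl_adj_within] by auto
  then have "(v1, v2) \<in> ?R" "(v2, v1) \<in> ?R"
    using w C1 C2 by (auto intro: rtrancl_trans)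
  then have "C1 = C2" unfolding C1 C2 by (auto intro: rtrancl_trans)
  then show False using assms(3) by simp
qed

lemma components_closed:
  assumes "C \<in> components L A" "v \<in> C" "w \<in> A" "adj L v w"
  shows "w \<in> C"
proof -
  obtain u where C: "C = {w \<in> A. (u, w) \<in> (adj_within L A)\<^sup>*}"
    using assms(1) by (rule components_memE)
  have "(v, w) \<in> adj_within L A" using assms C unfolding adj_within_def by blast
  then show ?thesis using assms(2,3) C by (auto intro: rtrancl_into_rtrancl)
qed

lemma Union_components: "\<Union>(components L A) = A"
  unfolding components_def by blast

lemma finite_components: "finite A \<Longrightarrow> finite (components L A)"
  by (rule finite_subset[of _ "Pow A"]) (auto dest: components_subset)

lemma components_eq_singletonI:
  assumes "v \<in> A" "\<And>w. w \<in> A \<Longrightarrow> (v, w) \<in> (adj_within L A)\<^sup>*"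
  shows "components L A = {A}"
proof -
  have "(u, w) \<in> (adj_within L A)\<^sup>*" if "u \<in> A" "w \<in> A" for u w
    using assms(2)[OF that(1)] assms(2)[OF that(2)] symD[OF sym_rtrancl_adj_within]
    by (blast intro: rtrancl_trans)
  then have "{w \<in> A. (u, w) \<in> (adj_within L A)\<^sup>*} = A" if "u \<in> A" for u
    using that by blast
  then show ?thesis unfolding components_def using assms(1) by blast
qed

lemma edge_boundary_eq: "edge_boundary L A = {(v, w). v \<in> A \<and> w \<notin> A \<and> adj L v w}"
  unfolding edge_boundary_def ext_boundary_def by (auto dest: adj_sites)

lemma finite_edge_boundary: "finite (edge_boundary L A)"
proof (rule finite_subset)
  show "edge_boundary L A \<subseteq> sites L \<times> sites L"
    unfolding edge_boundary_eq by (auto dest: adj_sites)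
qed (simp add: finite_sites)

lemma edge_boundary_component:
  assumes "C \<in> components L A"
  shows "edge_boundary L C = {(v, w) \<in> edge_boundary L A. v \<in> C}"
proof -
  have "w \<notin> C \<longleftrightarrow> w \<notin> A" if "v \<in> C" "adj L v w" for v w
    using that components_subset[OF assms] components_closed[OF assms] by blast
  then show ?thesis
    using components_subset[OF assms] unfolding edge_boundary_eq by blast
qed

lemma sum_perim_components:
  assumes "finite A"
  shows "(\<Sum>C\<in>components L A. perim L C) = perim L A"
proof -
  have "edge_boundary L A = (\<Union>C\<in>components L A. edge_boundary L C)"
  proof (intro equalityI subsetI)
    fix e assume e: "e \<in> edge_boundary L A"
    then have "fst e \<in> \<Union>(components L A)"
      unfolding Union_components edge_boundary_eq by auto
    then obtain C where "C \<in> components L A" "fst e \<in> C" by blast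
    then show "e \<in> (\<Union>C\<in>components L A. edge_boundary L C)"
      using e by (auto simp: edge_boundary_component)
  qed (auto simp: edge_boundary_component)
  then have "perim L A = card (\<Union>C\<in>components L A. edge_boundary L C)"
    unfolding perim_def by simp
  also have "\<dots> = (\<Sum>C\<in>components L A. card (edge_boundary L C))"
  proof (rule card_UN_disjoint)
    show "\<forall>C1\<in>components L A. \<forall>C2\<in>components L A.
        C1 \<noteq> C2 \<longrightarrow> edge_boundary L C1 \<inter> edge_boundary L C2 = {}"
    proof (intro ballI impI)
      fix C1 C2 assume C: "C1 \<in> components L A" "C2 \<in> components L A" "C1 \<noteq> C2"
      then have "C1 \<inter> C2 = {}" by (rule components_disjoint)
      then show "edge_boundary L C1 \<inter> edge_boundary L C2 = {}"
        unfolding edge_boundary_component[OF C(1)] edge_boundary_component[OF C(2)] by blast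
    qed
  qed (auto simp: finite_components[OF assms] finite_edge_boundary)
  finally show ?thesis unfolding perim_def ..
qed

abbreviation odd_occupied :: "nat \<Rightarrow> (site \<Rightarrow> bool) \<Rightarrow> site set" where
  "odd_occupied L \<sigma> \<equiv> {v \<in> odd_sites L. \<sigma> v}"

abbreviation even_vacant :: "nat \<Rightarrow> (site \<Rightarrow> bool) \<Rightarrow> site set" where
  "even_vacant L \<sigma> \<equiv> {v \<in> even_sites L. \<not> \<sigma> v}"

lemma finite_odd_occupied: "finite (odd_occupied L \<sigma>)"
  and finite_even_vacant: "finite (even_vacant L \<sigma>)"
  unfolding odd_sites_def even_sites_def sites_def by simp_all

lemma perimeter_eq_perim: "perimeter L \<sigma> = perim L (odd_region L \<sigma>)"
  unfolding perimeter_def odd_region_def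
  by (rule sum_perim_components) (simp add: finite_odd_occupied finite_even_vacant)

lemma card_edges_from:
  assumes "3 \<le> L" "S \<subseteq> sites L"
  shows "card (SIGMA v:S. {w. adj L v w}) = 4 * card S"
proof -
  have "finite S" using finite_subset[OF assms(2) finite_sites] .
  then have "card (SIGMA v:S. {w. adj L v w}) = (\<Sum>v\<in>S. card {w. adj L v w})"
    by (simp add: finite_neighbours)
  also have "\<dots> = (\<Sum>v\<in>S. 4)" using assms card_neighbours by (intro sum.cong) auto
  finally show ?thesis by simp
qed

lemma ext_boundary_odd_occupied:
  assumes "even L" "2 \<le> L" "\<sigma> \<in> hardcore L"
  shows "ext_boundary L (odd_occupied L \<sigma>) \<subseteq> even_vacant L \<sigma>"
  using assms adj_odd_iff_even[OF assms(1,2)] unfolding ext_boundary_def hardcore_def by blast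

lemma perimeter_formula:
  assumes "even L" "4 \<le> L" "\<sigma> \<in> hardcore L"
  shows "perimeter L \<sigma> + 4 * card (odd_occupied L \<sigma>) = 4 * card (even_vacant L \<sigma>)"
proof -
  let ?K = "odd_occupied L \<sigma>" and ?E = "even_vacant L \<sigma>"
  have L: "2 \<le> L" "3 \<le> L" using assms(2) by auto
  have hc: "\<And>v w. adj L v w \<Longrightarrow> \<not> (\<sigma> v \<and> \<sigma> w)"
    using assms(3) unfolding hardcore_def by auto
  note parity = adj_odd_iff_even[OF assms(1) L(1)] adj_even_iff_odd[OF assms(1) L(1)]
  have sites: "?K \<subseteq> sites L" "?E \<subseteq> sites L"
    unfolding odd_sites_def even_sites_def by auto
  have boundary: "edge_boundary L (odd_region L \<sigma>) = {(v, w). v \<in> ?E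
      \<and> adj L v w \<and> \<not> \<sigma> w}"
    unfolding edge_boundary_eq odd_region_def
    using parity hc odd_sites_Int_even_sites by blast
  have to_occupied: "{(v, w). v \<in> ?E \<and> adj L v w
      \<and> \<sigma> w} = prod.swap ` (SIGMA w:?K. {v. adj L w v})"
    using parity hc adj_commute by fastforce
  have edges: "(SIGMA v:?E. {w. adj L v w}) =
      {(v, w). v \<in> ?E \<and> adj L v w
        \<and> \<not> \<sigma> w} \<union> {(v, w). v \<in> ?E \<and> adj L v w \<and> \<sigma> w}"
    by auto
  have "finite (SIGMA v:?E. {w. adj L v w})"
    by (simp add: finite_even_vacant finite_neighbours)
  then have "4 * card ?E =
      card {(v, w). v \<in> ?E \<and> adj L v w
        \<and> \<not> \<sigma> w} + card {(v, w). v \<in> ?E \<and> adj L v w \<and> \<sigma> w}"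
    unfolding card_edges_from[OF L(2) sites(2), symmetric] edges
    by (intro card_Un_disjoint) (auto simp: edges)
  also have "\<dots> = perimeter L \<sigma> + 4 * card ?K"
    unfolding perimeter_eq_perim perim_def boundary to_occupied card_edges_from[OF L(2) sites(1), symmetric]
    by (simp add: card_image)
  finally show ?thesis by simp
qed

section \<open>Rows\<close>

definition row :: "nat \<Rightarrow> site set \<Rightarrow> nat \<Rightarrow> nat set" where
  "row L A y = {x. (x, y mod L) \<in> A}"

definition row_nbrs :: "nat \<Rightarrow> nat set \<Rightarrow> nat set" where
  "row_nbrs L X = (\<lambda>x. Suc x mod L) ` X \<union> (\<lambda>x. (x + L - 1) mod L) ` X"

lemma row_add_period [simp]: "row L A (y + L) = row L A y"
  unfolding row_def by simp

lemma row_mod [simp]: "row L A (y mod L) = row L A y"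
  unfolding row_def by simp

lemma row_subset_lessThan: "A \<subseteq> sites L \<Longrightarrow> row L A y \<subseteq> {..<L}"
  unfolding row_def sites_def by auto

lemma finite_row: "A \<subseteq> sites L \<Longrightarrow> finite (row L A y)"
  by (rule finite_subset[OF row_subset_lessThan]) auto

lemma card_eq_sum_rows:
  assumes "A \<subseteq> sites L"
  shows "card A = (\<Sum>y<L. card (row L A y))"
proof -
  have "prod.swap ` (SIGMA y:{..<L}. row L A y) = A"
    using assms unfolding row_def sites_def by force
  then have "card A = card (SIGMA y:{..<L}. row L A y)"
    using card_image[OF inj_swap, of "SIGMA y:{..<L}. row L A y"] by simp
  also have "\<dots> = (\<Sum>y<L. card (row L A y))"
    using finite_row[OF assms] by simp
  finally show ?thesis .
qed

lemma inj_on_Suc_mod: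
  fixes L :: nat
  shows "inj_on (\<lambda>x. Suc x mod L) {..<L}"
  by (rule inj_onI) (auto simp: Suc_mod_if split: if_splits)

lemma inj_on_pred_mod:
  fixes L :: nat
  shows "inj_on (\<lambda>x. (x + L - 1) mod L) {..<L}"
proof (rule inj_onI)
  fix x y assume xy: "x \<in> {..<L}" "y \<in> {..<L}" "(x + L - 1) mod L = (y + L - 1) mod L"
  define a where "a = (x + L - 1) mod L"
  have "a < L" using xy unfolding a_def by simp
  then have "x = Suc a mod L" "y = Suc a mod L"
    using eq_Suc_mod_iff[of a L x] eq_Suc_mod_iff[of a L y] xy unfolding a_def by auto
  then show "x = y" by simp
qed

lemma card_parity_class:
  assumes "even L"
  shows "card {x. x < L \<and> odd (x + c)} = L div 2"
proof -
  let ?O = "{x. x < L \<and> odd (x + c)}" and ?E = "{x. x < L \<and> even (x + c)}"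
  have "(\<lambda>x. Suc x mod L) ` ?O \<subseteq> ?E" "(\<lambda>x. Suc x mod L) ` ?E \<subseteq> ?O"
    by (auto simp: even_Suc_mod_iff[OF assms])
  moreover have "inj_on (\<lambda>x. Suc x mod L) ?O" "inj_on (\<lambda>x. Suc x mod L) ?E"
    by (rule inj_on_subset[OF inj_on_Suc_mod], auto)+
  ultimately have "card ?O \<le> card ?E" "card ?E \<le> card ?O"
    by (simp_all add: card_inj_on_le)
  moreover have "?O \<union> ?E = {..<L}" "?O \<inter> ?E = {}" by auto
  then have "card ?O + card ?E = L"
    using card_Un_disjoint[of ?O ?E] by simp
  ultimately show ?thesis by linarith
qed

lemma row_nbrs_mono: "X \<subseteq> Y \<Longrightarrow> row_nbrs L X \<subseteq> row_nbrs L Y"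
  unfolding row_nbrs_def by auto

lemma card_le_card_row_nbrs:
  assumes "X \<subseteq> {..<L}"
  shows "card X \<le> card (row_nbrs L X)"
proof -
  have "finite X" using finite_subset[OF assms] by simp
  have "card X = card ((\<lambda>x. Suc x mod L) ` X)"
    using card_image[OF inj_on_subset[OF inj_on_Suc_mod assms]] by simp
  also have "\<dots> \<le> card (row_nbrs L X)"
    unfolding row_nbrs_def by (rule card_mono) (use \<open>finite X\<close> in auto)
  finally show ?thesis .
qed

lemma parity_class_subset:
  assumes "even L" "X \<subseteq> {x. x < L \<and> odd (x + c)}" "a \<in> X"
    and closed: "\<And>x. x \<in> X \<Longrightarrow> Suc (Suc x) mod L \<in> X"
  shows "{x. x < L \<and> odd (x + c)} \<subseteq> X"
proof
  have aL: "a < L" and odd_a: "odd (a + c)" using assms(2,3) by auto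
  have steps: "(a + 2 * t) mod L \<in> X" for t
  proof (induction t)
    case 0 then show ?case using aL assms(3) by simp
  next
    case (Suc t)
    have "Suc (Suc (m mod L)) mod L = Suc (Suc m) mod L" for m
      by (metis mod_Suc_eq)
    then have "(a + 2 * Suc t) mod L = Suc (Suc ((a + 2 * t) mod L)) mod L"
      by simp
    then show ?case using closed[OF Suc] by simp
  qed
  fix x assume "x \<in> {x. x < L \<and> odd (x + c)}"
  then have xL: "x < L" and "odd (x + c)" by auto
  then have "even ((x + L - a) mod L)"
    using odd_a aL even_mod_iff[OF assms(1)] assms(1) by auto
  then obtain t where t: "(x + L - a) mod L = 2 * t" by (auto elim: evenE)
  have "(a + 2 * t) mod L = (a + (x + L - a)) mod L"
    unfolding t[symmetric] by (simp add: mod_add_right_eq)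
  also have "\<dots> = x" using aL xL by simp
  finally show "x \<in> X" using steps[of t] by simp
qed

lemma card_row_nbrs_gt:
  assumes "even L" "X \<subseteq> {x. x < L \<and> odd (x + c)}" "X \<noteq> {}" "card X < L div 2"
  shows "card X + 1 \<le> card (row_nbrs L X)"
proof -
  have XL: "X \<subseteq> {..<L}" using assms(2) by auto
  then have "finite X" by (rule finite_subset) simp
  have "\<not> {x. x < L \<and> odd (x + c)} \<subseteq> X"
  proof
    assume "{x. x < L \<and> odd (x + c)} \<subseteq> X"
    from card_mono[OF \<open>finite X\<close> this] show False
      using card_parity_class[OF assms(1)] assms(4) by simp
  qed
  then obtain x where x: "x \<in> X" "Suc (Suc x) mod L \<notin> X"
    using parity_class_subset[OF assms(1,2)] assms(3) by blast
  \<comment> \<open>Then x + 1 is a right neighbour of X but not a left one.\<close>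
  let ?z = "Suc x mod L"
  have "?z \<notin> (\<lambda>x. (x + L - 1) mod L) ` X"
  proof
    assume "?z \<in> (\<lambda>x. (x + L - 1) mod L) ` X"
    then obtain w where w: "w \<in> X" "?z = (w + L - 1) mod L" by auto
    have "0 < L" using x XL by auto
    then have "w = Suc (Suc x mod L) mod L" using eq_Suc_mod_iff[of ?z L w] w XL by auto
    then have "w = Suc (Suc x) mod L" by (simp add: mod_Suc_eq)
    then show False using w x by simp
  qed
  moreover have "card ((\<lambda>x. (x + L - 1) mod L) ` X) = card X"
    using card_image[OF inj_on_subset[OF inj_on_pred_mod XL]] .
  ultimately have "card X + 1 = card (insert ?z ((\<lambda>x. (x + L - 1) mod L) ` X))"
    using \<open>finite X\<close> by simp
  also have "\<dots> \<le> card (row_nbrs L X)"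
  proof (rule card_mono)
    show "finite (row_nbrs L X)" unfolding row_nbrs_def using \<open>finite X\<close> by simp
    show "insert ?z ((\<lambda>x. (x + L - 1) mod L) ` X) \<subseteq> row_nbrs L X"
      unfolding row_nbrs_def using x(1) by blast
  qed
  finally show ?thesis .
qed

locale odd_set =
  fixes L :: nat and K :: "site set"
  assumes even_L: "even L" and L_ge_4: "4 \<le> L" and K_odd: "K \<subseteq> odd_sites L"
begin

lemma K_sites: "K \<subseteq> sites L"
  using K_odd unfolding odd_sites_def by auto

lemma adj_K_boundary: "v \<in> K \<Longrightarrow> adj L v w
    \<Longrightarrow> w \<in> ext_boundary L K"
  using ext_boundary_memI[OF even_L _ K_odd] L_ge_4 by simp

lemma row_Suc_subset: "row L K (Suc y) \<subseteq> row L (ext_boundary L K) y"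
proof
  fix x assume "x \<in> row L K (Suc y)"
  then have v: "(x, Suc y mod L) \<in> K" unfolding row_def by simp
  then have "x < L" using K_sites unfolding sites_def by auto
  then have "adj L (x, Suc y mod L) (x, (Suc y mod L + L - 1) mod L)"
    using L_ge_4 adj_iff[of L] by simp
  then have "adj L (x, Suc y mod L) (x, y mod L)"
    using pred_mod_Suc_mod[of L y] L_ge_4 by simp
  then show "x \<in> row L (ext_boundary L K) y"
    using adj_K_boundary[OF v] unfolding row_def by simp
qed

lemma row_subset_Suc: "row L K y \<subseteq> row L (ext_boundary L K) (Suc y)"
proof
  fix x assume "x \<in> row L K y"
  then have v: "(x, y mod L) \<in> K" unfolding row_def by simp
  then have "x < L" using K_sites unfolding sites_def by auto
  then have "adj L (x, y mod L) (x, Suc (y mod L) mod L)"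
    using L_ge_4 adj_iff[of L] by simp
  then show "x \<in> row L (ext_boundary L K) (Suc y)"
    using adj_K_boundary[OF v] unfolding row_def by (simp add: mod_Suc_eq)
qed

lemma row_nbrs_subset: "row_nbrs L (row L K y) \<subseteq> row L (ext_boundary L K) y"
proof
  fix z assume "z \<in> row_nbrs L (row L K y)"
  then obtain x where v: "(x, y mod L) \<in> K" and z: "z = Suc x mod L \<or> z = (x + L - 1) mod L"
    unfolding row_nbrs_def row_def by auto
  moreover from v have "x < L" using K_sites unfolding sites_def by auto
  ultimately have "adj L (x, y mod L) (z, y mod L)"
    using L_ge_4 adj_iff[of L] by auto
  then show "z \<in> row L (ext_boundary L K) y"
    using adj_K_boundary[OF v] unfolding row_def by simp
qed

lemma row_parity_class: "row L K y \<subseteq> {x. x < L \<and> odd (x + y mod L)}"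
  using K_odd unfolding row_def odd_sites_def sites_def by auto

lemma card_row_le: "card (row L K y) \<le> L div 2"
  using card_mono[OF _ row_parity_class] card_parity_class[OF even_L] by simp

end

section \<open>One-dimensional estimates\<close>

definition tent :: "nat \<Rightarrow> nat \<Rightarrow> nat" where
  "tent m p = min p (m - 1 - p)"

definition tent_sum :: "nat \<Rightarrow> nat" where
  "tent_sum m = (\<Sum>p<m. tent m p)"

lemma tent_sum_Suc_Suc: "tent_sum (Suc (Suc m)) = tent_sum m + m"
proof -
  have "tent_sum (Suc (Suc m)) = (\<Sum>p<Suc (Suc m). min p (Suc m - p))"
    unfolding tent_sum_def tent_def by simp
  also have "\<dots> = (\<Sum>p<Suc m. min (Suc p) (m - p))"
    by (subst sum.lessThan_Suc_shift) simp
  also have "\<dots> = (\<Sum>p<m. min (Suc p) (m - p))"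
    by simp
  also have "\<dots> = (\<Sum>p<m. 1 + min p (m - 1 - p))"
    by (rule sum.cong) auto
  also have "\<dots> = m + tent_sum m"
    unfolding tent_sum_def tent_def sum.distrib by simp
  finally show ?thesis by simp
qed

lemma four_tent_sum_le: "4 * tent_sum m \<le> (m - 1)^2"
proof (induction m rule: less_induct)
  case (less m)
  show ?case
  proof (cases m)
    case (Suc m1)
    show ?thesis
    proof (cases m1)
      case (Suc k)
      have "4 * tent_sum m = 4 * tent_sum k + 4 * k"
        using tent_sum_Suc_Suc \<open>m = Suc m1\<close> Suc by simp
      also have "\<dots> \<le> (k - 1)^2 + 4 * k"
        using less \<open>m = Suc m1\<close> Suc by simp
      also have "\<dots> \<le> (m - 1)^2"
        using \<open>m = Suc m1\<close> Suc by (cases k) (simp_all add: power2_eq_square)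
      finally show ?thesis .
    qed (simp add: \<open>m = Suc m1\<close> tent_sum_def tent_def)
  qed (simp add: tent_sum_def)
qed

text \<open>The constraints satisfied by the row counts a of a set of odd sites and b of its outer
  boundary.\<close>

locale row_profile =
  fixes a b :: "nat \<Rightarrow> nat"
  assumes a_Suc_le: "a (Suc j) \<le> b j" and a_le_Suc: "a j \<le> b (Suc j)"
    and a_le: "a j \<le> b j"
begin

definition gap :: "nat \<Rightarrow> nat" where
  "gap j = b j - a j"

definition gaps :: "nat \<Rightarrow> nat" where
  "gaps j = (\<Sum>i<j. gap i)"

lemma b_eq: "b j = a j + gap j"
  unfolding gap_def using a_le[of j] by simp

lemma gaps_Suc: "gaps (Suc j) = gaps j + gap j"
  unfolding gaps_def by simp

lemma gaps_mono: "j \<le> j' \<Longrightarrow> gaps j \<le> gaps j'"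
  unfolding gaps_def by (rule sum_mono2) auto

lemma sum_b: "(\<Sum>j<n. b j) = (\<Sum>j<n. a j) + gaps n"
proof -
  have "(\<Sum>j<n. b j) = (\<Sum>j<n. a j + gap j)" by (rule sum.cong[OF refl b_eq])
  then show ?thesis unfolding gaps_def by (simp add: sum.distrib)
qed

end

text \<open>Row counts read from an empty boundary row 0 round the torus back to it.\<close>

locale vanishing_profile = row_profile +
  fixes n :: nat
  assumes b_0: "b 0 = 0" and b_n: "b n = 0"
    and gap_pos: "j < n \<Longrightarrow> 0 < a j \<Longrightarrow> 0 < gap j"
begin

lemma a_le_gaps: "a j \<le> gaps j"
proof (induction j)
  case (Suc j)
  then show ?case using a_Suc_le[of j] b_eq[of j] gaps_Suc[of j] by simp
qed (use a_le[of 0] b_0 in simp)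

lemma a_add_gaps_le:
  assumes "j < n"
  shows "a j + gaps (Suc j) \<le> gaps n"
proof -
  have "b i + gaps i \<le> gaps n" if "i \<le> n" for i
    using that
  proof (induction i rule: inc_induct)
    case (step i)
    then show ?case using a_le_Suc[of i] b_eq[of i] b_eq[of "Suc i"] gaps_Suc[of i] by simp
  qed (simp add: b_n)
  from this[of j] show ?thesis using assms b_eq[of j] gaps_Suc[of j] by simp
qed

definition supp :: "nat set" where
  "supp = {j. j < n \<and> 0 < a j}"

lemma finite_supp: "finite supp"
  unfolding supp_def by simp

lemma a_le_tent:
  assumes "j \<in> supp"
  shows "a j \<le> tent (gaps n) (gaps j)" and "gaps j < gaps n"
proof -
  have "a j + gaps j + 1 \<le> gaps n"
    using assms a_add_gaps_le[of j] gaps_Suc[of j] gap_pos[of j] unfolding supp_def by simp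
  then show "a j \<le> tent (gaps n) (gaps j)" "gaps j < gaps n"
    using a_le_gaps[of j] unfolding tent_def by auto
qed

lemma gaps_less: "j \<in> supp \<Longrightarrow> j < j' \<Longrightarrow> gaps j < gaps j'"
  using gaps_mono[of "Suc j" j'] gaps_Suc[of j] gap_pos[of j] unfolding supp_def by simp

lemma inj_on_gaps: "inj_on gaps supp"
proof (rule inj_onI)
  fix x y assume "x \<in> supp" "y \<in> supp" "gaps x = gaps y"
  then show "x = y" using gaps_less[of x y] gaps_less[of y x]
    by (cases x y rule: linorder_cases) auto
qed

lemma sum_supp: "(\<Sum>j<n. a j) = (\<Sum>j\<in>supp. a j)"
  unfolding supp_def by (rule sum.mono_neutral_right) auto

lemma sum_tent_gaps_le: "(\<Sum>j\<in>supp. tent (gaps n) (gaps j)) \<le> tent_sum (gaps n)"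
proof -
  have "(\<Sum>j\<in>supp. tent (gaps n) (gaps j)) = (\<Sum>p\<in>gaps ` supp. tent (gaps n) p)"
    by (simp add: sum.reindex[OF inj_on_gaps])
  also have "\<dots> \<le> tent_sum (gaps n)"
    unfolding tent_sum_def by (rule sum_mono2) (auto simp: a_le_tent)
  finally show ?thesis .
qed

lemma sum_le_tent_sum: "(\<Sum>j<n. a j) \<le> tent_sum (gaps n)"
  using sum_mono[of supp a "\<lambda>j. tent (gaps n) (gaps j)"] a_le_tent sum_tent_gaps_le
  by (simp add: sum_supp)

context
  fixes l :: nat
  assumes tight: "(\<Sum>j<n. a j) = tent_sum (gaps n)" and gaps_n: "gaps n = 2 * l + 1"
    and l_pos: "1 \<le> l"
begin

lemma tent_gaps_n: "tent (gaps n) p = min p (2 * l - p)"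
  unfolding tent_def gaps_n by simp

lemma a_eq_tent: "j \<in> supp \<Longrightarrow> a j = tent (gaps n) (gaps j)"
proof (rule ccontr)
  assume j: "j \<in> supp" "a j \<noteq> tent (gaps n) (gaps j)"
  then have "a j < tent (gaps n) (gaps j)" using a_le_tent(1)[OF j(1)] by simp
  then have "(\<Sum>j\<in>supp. a j) < (\<Sum>j\<in>supp. tent (gaps n) (gaps j))"
    using j(1) a_le_tent(1) by (intro sum_strict_mono_ex1[OF finite_supp]) auto
  then show False using tight sum_tent_gaps_le by (simp add: sum_supp)
qed

lemma tent_attained:
  assumes "p < gaps n" "0 < tent (gaps n) p"
  shows "p \<in> gaps ` supp"
proof (rule ccontr)
  assume "p \<notin> gaps ` supp"
  then have "(\<Sum>p\<in>gaps ` supp. tent (gaps n) p) < tent_sum (gaps n)"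
    unfolding tent_sum_def using assms a_le_tent(2)
    by (intro sum_strict_mono2[of "{..<gaps n}" _ p]) auto
  then show False
    using tight sum_mono[of supp a "\<lambda>j. tent (gaps n) (gaps j)"] a_le_tent(1)
    by (simp add: sum_supp sum.reindex[OF inj_on_gaps])
qed

lemma gaps_supp_range: "j \<in> supp \<Longrightarrow> 1 \<le> gaps j \<and> gaps j \<le> 2 * l - 1"
  using a_eq_tent[of j] tent_gaps_n[of "gaps j"] unfolding supp_def by auto

lemma supp_Suc:
  assumes j: "j \<in> supp" and "gaps j < 2 * l - 1"
  shows "Suc j \<in> supp \<and> gaps (Suc j) = gaps j + 1"
proof -
  obtain j' where j': "j' \<in> supp" "gaps j' = gaps j + 1"
    using tent_attained[of "gaps j + 1"] assms gaps_n tent_gaps_n by force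
  have "j < j'" using j' gaps_mono[of j' j] by (cases "j < j'") auto
  then have "Suc j < n" using j' unfolding supp_def by simp
  show ?thesis
  proof (cases "a (Suc j) = 0")
    case True
    then have "0 < gap (Suc j)"
      using j a_le_Suc[of j] b_eq[of "Suc j"] unfolding supp_def by simp
    moreover have "Suc (Suc j) \<le> j'"
      using True j' \<open>j < j'\<close> unfolding supp_def by (cases "Suc j = j'") auto
    ultimately have False
      using gaps_mono[of "Suc (Suc j)" j'] gaps_Suc[of j] gaps_Suc[of "Suc j"] gap_pos[of j] j j'
      unfolding supp_def by simp
    then show ?thesis ..
  next
    case False
    then have "Suc j \<in> supp" using \<open>Suc j < n\<close> unfolding supp_def by simp
    moreover have "gaps (Suc j) = gaps j + 1"
      using gaps_mono[of "Suc j" j'] \<open>j < j'\<close> gaps_Suc[of j] gap_pos[of j] j j'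
      unfolding supp_def by simp
    ultimately show ?thesis by simp
  qed
qed

lemma supp_chain: "\<exists>y0. \<forall>i. 1 \<le> i \<and> i \<le> 2 * l - 1
    \<longrightarrow> y0 + i \<in> supp \<and> gaps (y0 + i) = i"
proof -
  obtain j0 where j0: "j0 \<in> supp" "gaps j0 = 1"
    using tent_attained[of 1] l_pos gaps_n tent_gaps_n by force
  have chain: "j0 + i \<in> supp \<and> gaps (j0 + i) = i + 1" if "i \<le> 2 * l - 2" for i
    using that
  proof (induction i)
    case (Suc i)
    then show ?case using supp_Suc[of "j0 + i"] by simp
  qed (use j0 in simp)
  have "j0 \<noteq> 0"
    using j0(1) a_le[of 0] b_0 unfolding supp_def by (cases j0) auto
  then have "(j0 - 1) + i \<in> supp
      \<and> gaps ((j0 - 1) + i) = i" if "1 \<le> i" "i \<le> 2 * l - 1" for i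
    using chain[of "i - 1"] that by simp
  then show ?thesis by blast
qed

lemma gap_chain:
  assumes chain: "\<forall>i. 1 \<le> i \<and> i \<le> 2 * l - 1
      \<longrightarrow> y0 + i \<in> supp \<and> gaps (y0 + i) = i"
    and i: "1 \<le> i" "i \<le> 2 * l - 1"
  shows "gap (y0 + i) = 1"
proof (cases "i < 2 * l - 1")
  case True
  then have "gaps (y0 + Suc i) = Suc i" "gaps (y0 + i) = i"
    using chain[rule_format, of "Suc i"] chain[rule_format, of i] i by simp_all
  then show ?thesis using gaps_Suc[of "y0 + i"] by simp
next
  case False
  then have "i = 2 * l - 1" using i by simp
  have ch: "y0 + i \<in> supp" "gaps (y0 + i) = i" using chain i by auto
  then have "1 + i + gap (y0 + i) \<le> 2 * l + 1"
    using a_add_gaps_le[of "y0 + i"] a_eq_tent[OF ch(1)] gaps_Suc[of "y0 + i"] gaps_n l_pos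
      \<open>i = 2 * l - 1\<close> unfolding supp_def tent_def by simp
  moreover have "0 < gap (y0 + i)" using gap_pos[of "y0 + i"] ch(1) unfolding supp_def by simp
  ultimately show ?thesis using \<open>i = 2 * l - 1\<close> l_pos by linarith
qed

lemma supp_within_chain:
  assumes chain: "\<forall>i. 1 \<le> i \<and> i \<le> 2 * l - 1
      \<longrightarrow> y0 + i \<in> supp \<and> gaps (y0 + i) = i"
    and j: "j \<in> supp"
  shows "y0 < j \<and> j < y0 + 2 * l"
proof -
  have i: "1 \<le> gaps j" "gaps j \<le> 2 * l - 1" using gaps_supp_range[OF j] by auto
  then have "y0 + gaps j \<in> supp" "gaps (y0 + gaps j) = gaps j" using chain by auto
  then have "y0 + gaps j = j" using inj_on_gaps j by (auto dest: inj_onD)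
  then show ?thesis using i l_pos by linarith
qed

theorem tent_profile:
  "\<exists>y0. (\<forall>i. 1 \<le> i \<and> i \<le> 2 * l - 1
      \<longrightarrow> a (y0 + i) = tent (2 * l + 1) i \<and> b (y0 + i) = a (y0 + i) + 1)
     \<and> (\<forall>j<n. 0 < a j \<longrightarrow> y0 < j \<and> j < y0 + 2 * l)"
proof -
  obtain y0 where chain: "\<forall>i. 1 \<le> i \<and> i \<le> 2 * l - 1
      \<longrightarrow> y0 + i \<in> supp \<and> gaps (y0 + i) = i"
    using supp_chain by blast
  have "a (y0 + i) = tent (2 * l + 1) i" if "1 \<le> i" "i \<le> 2 * l - 1" for i
    using chain that a_eq_tent gaps_n by simp
  moreover have "b (y0 + i) = a (y0 + i) + 1" if "1 \<le> i" "i \<le> 2 * l - 1" for i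
    using gap_chain[OF chain that] b_eq by simp
  moreover have "y0 < j \<and> j < y0 + 2 * l" if "j < n" "0 < a j" for j
    using supp_within_chain[OF chain] that unfolding supp_def by simp
  ultimately show ?thesis by blast
qed

end

end

text \<open>Row counts read from a full row 0, of h = n/2 sites, round the torus back to it.\<close>

locale saturated_profile = row_profile +
  fixes n h :: nat
  assumes a_0: "a 0 = h" and a_n: "a n = h" and n_eq: "n = 2 * h" and n_ge: "4 \<le> n"
    and a_le_h: "a j \<le> h" and gap_pos: "0 < a j \<Longrightarrow> a j < h
        \<Longrightarrow> 0 < gap j"
    and gaps_n_less: "gaps n < n"
begin

lemma h_le_a_gaps: "h \<le> a j + gaps (Suc j)"
proof (induction j)
  case (Suc j)
  then show ?case using a_le_Suc[of j] b_eq[of "Suc j"] gaps_Suc[of "Suc j"] by simp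
qed (simp add: a_0)

lemma h_gaps_le: "j \<le> n \<Longrightarrow> h + gaps j \<le> a j + gaps n"
proof (induction j rule: inc_induct)
  case (step j)
  then show ?case using a_Suc_le[of j] b_eq[of j] gaps_Suc[of j] by simp
qed (simp add: a_n)

lemma b_pos: "j < n \<Longrightarrow> 0 < b j"
proof (rule ccontr)
  assume j: "j < n" "\<not> 0 < b j"
  then have "a j = 0" "a (Suc j) = 0" using a_le[of j] a_Suc_le[of j] by simp_all
  moreover have "j \<noteq> 0" using a_0 n_eq n_ge \<open>a j = 0\<close> by (cases j) auto
  then obtain i where i: "j = Suc i" by (cases j) auto
  ultimately have "a i = 0" using a_le_Suc[of i] j by simp
  then have "h \<le> gaps j" using h_le_a_gaps[of i] i by simp
  moreover have "h + gaps (Suc j) \<le> gaps n"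
    using h_gaps_le[of "Suc j"] j \<open>a (Suc j) = 0\<close> by simp
  ultimately have "2 * h \<le> gaps n" using gaps_mono[of j "Suc j"] by simp
  then show False using gaps_n_less n_eq by simp
qed

definition unsat :: "nat set" where
  "unsat = {j. 1 \<le> j \<and> j < n \<and> a j < h}"

lemma finite_unsat: "finite unsat"
  unfolding unsat_def by simp

lemma gap_pos_unsat: "j \<in> unsat \<Longrightarrow> 0 < gap j"
  using gap_pos[of j] b_pos[of j] b_eq[of j] unfolding unsat_def by (cases "a j = 0") auto

lemma h_le_unsat: "j \<in> unsat
    \<Longrightarrow> h \<le> a j + tent (gaps n + 2) (gaps (Suc j)) + (gap j - 1)"
  using h_le_a_gaps[of j] h_gaps_le[of j] gaps_Suc[of j] gap_pos_unsat[of j]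
  unfolding unsat_def tent_def by auto

lemma gaps_Suc_less: "j \<in> unsat \<Longrightarrow> j' \<in> unsat
    \<Longrightarrow> j < j' \<Longrightarrow> gaps (Suc j) < gaps (Suc j')"
  using gaps_mono[of "Suc j" j'] gaps_Suc[of j'] gap_pos_unsat[of j'] by simp

lemma inj_on_gaps_Suc: "inj_on (\<lambda>j. gaps (Suc j)) unsat"
proof (rule inj_onI)
  fix x y assume "x \<in> unsat" "y \<in> unsat" "gaps (Suc x) = gaps (Suc y)"
  then show "x = y" using gaps_Suc_less[of x y] gaps_Suc_less[of y x]
    by (cases x y rule: linorder_cases) auto
qed

lemma sum_tent_unsat_le: "(\<Sum>j\<in>unsat. tent (gaps n + 2) (gaps (Suc j))) \<le> tent_sum (gaps n + 2)"
proof -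
  have "(\<Sum>j\<in>unsat. tent (gaps n + 2) (gaps (Suc j)))
      = (\<Sum>p\<in>(\<lambda>j. gaps (Suc j)) ` unsat. tent (gaps n + 2) p)"
    by (simp add: sum.reindex[OF inj_on_gaps_Suc])
  also have "\<dots> \<le> tent_sum (gaps n + 2)"
    unfolding tent_sum_def
  proof (rule sum_mono2)
    have "gaps (Suc j) \<le> gaps n" if "j \<in> unsat" for j
      using that gaps_mono[of "Suc j" n] unfolding unsat_def by simp
    then show "(\<lambda>j. gaps (Suc j)) ` unsat \<subseteq> {..<gaps n + 2}" by fastforce
  qed simp_all
  finally show ?thesis .
qed

lemma sum_gap_unsat: "(\<Sum>j\<in>unsat. gap j - 1) + card unsat \<le> gaps n"
proof -
  have "(\<Sum>j\<in>unsat. gap j - 1) + card unsat = (\<Sum>j\<in>unsat. (gap j - 1) + 1)"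
    by (subst sum.distrib) simp
  also have "\<dots> = (\<Sum>j\<in>unsat. gap j)"
    using gap_pos_unsat by (intro sum.cong) auto
  also have "\<dots> \<le> gaps n"
    unfolding gaps_def by (rule sum_mono2) (auto simp: unsat_def)
  finally show ?thesis .
qed

lemma sum_a_eq: "(\<Sum>j<n. a j) + card unsat * h = n * h + (\<Sum>j\<in>unsat. a j)"
proof -
  have sat: "a j = h" if "j \<in> {..<n} - unsat" for j
    using that a_le_h[of j] a_0 unfolding unsat_def by (cases "j = 0") auto
  have "unsat \<subseteq> {..<n}" unfolding unsat_def by auto
  then have "(\<Sum>j<n. a j) = (\<Sum>j\<in>unsat. a j) + (\<Sum>j\<in>{..<n} - unsat. a j)"
    by (simp add: sum.subset_diff finite_unsat add.commute)
  also have "(\<Sum>j\<in>{..<n} - unsat. a j) = (n - card unsat) * h"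
    using sat \<open>unsat \<subseteq> {..<n}\<close> by (simp add: card_Diff_subset finite_unsat)
  moreover have "(n - card unsat) * h + card unsat * h = n * h"
    using card_mono[OF _ \<open>unsat \<subseteq> {..<n}\<close>]
      by (simp add: add_mult_distrib[symmetric])
  ultimately show ?thesis by linarith
qed

theorem sum_b_ge: "n^2 + 4 \<le> 4 * (\<Sum>j<n. b j)"
proof -
  have "4 * tent_sum (gaps n + 2) \<le> (gaps n + 1)^2"
    using four_tent_sum_le[of "gaps n + 2"] by simp
  also have "\<dots> \<le> n^2" using gaps_n_less by (intro power_mono) auto
  finally have G: "4 * tent_sum (gaps n + 2) \<le> n^2" .
  have "card unsat * h \<le> (\<Sum>j\<in>unsat. a j + tent (gaps n + 2) (gaps (Suc j)) + (gap j - 1))"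
    using sum_mono[of unsat "\<lambda>_. h"] h_le_unsat by simp
  then have "card unsat * h + card unsat \<le> (\<Sum>j\<in>unsat. a j) + tent_sum (gaps n + 2) + gaps n"
    using sum_tent_unsat_le sum_gap_unsat by (simp add: sum.distrib)
  then have "n * h + card unsat \<le> (\<Sum>j<n. a j) + tent_sum (gaps n + 2) + gaps n"
    using sum_a_eq by linarith
  moreover have "4 * (n * h) = 2 * n^2" using n_eq by (simp add: power2_eq_square)
  ultimately have "2 * n^2 + 4 * card unsat \<le> 4 * (\<Sum>j<n. b j) + n^2"
    using G sum_b[of n] by linarith
  moreover have "4 \<le> n^2" using n_ge power_mono[of 2 n 2] by simp
  ultimately show ?thesis
  proof (cases "unsat = {}")
    case True
    then have "n * h \<le> (\<Sum>j<n. b j)" using sum_a_eq sum_b[of n] by simp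
    then show ?thesis using \<open>4 * (n * h) = 2 * n^2\<close> \<open>4 \<le> n^2\<close> by linarith
  next
    case False
    then have "1 \<le> card unsat" using finite_unsat by (simp add: Suc_le_eq card_gt_0_iff)
    then show ?thesis using \<open>2 * n^2 + 4 * card unsat \<le> 4 * (\<Sum>j<n. b j) + n^2\<close> by linarith
  qed
qed

end

lemma sum_shift_periodic:
  fixes f :: "nat \<Rightarrow> nat"
  assumes "\<And>y. f (y + L) = f y"
  shows "(\<Sum>j<L. f (e + j)) = (\<Sum>y<L. f y)"
proof (induction e)
  case (Suc e)
  have "(\<Sum>j<Suc L. f (e + j)) = f e + (\<Sum>j<L. f (Suc e + j))"
    by (subst sum.lessThan_Suc_shift) simp
  moreover have "(\<Sum>j<Suc L. f (e + j)) = (\<Sum>j<L. f (e + j)) + f e"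
    using assms[of e] by (simp add: add.commute)
  ultimately show ?case using Suc by simp
qed simp

lemma periodic_mod:
  fixes f :: "nat \<Rightarrow> 'a"
  assumes "\<And>y. f (y + L) = f y"
  shows "f (y mod L) = f y"
proof -
  have "f (r + L * m) = f r" for r m
  proof (induction m)
    case (Suc m)
    have "r + L * Suc m = (r + L * m) + L" by simp
    then show ?case using assms Suc by metis
  qed simp
  then show ?thesis by (metis mod_mult_div_eq)
qed

locale torus_profile = row_profile +
  fixes L h :: nat
  assumes a_periodic: "a (y + L) = a y" and b_periodic: "b (y + L) = b y"
    and L_eq: "L = 2 * h" and a_le_h: "a y \<le> h"
    and gap_pos: "0 < a y \<Longrightarrow> a y < h \<Longrightarrow> 0 < gap y"
begin

lemma shifted: "row_profile (\<lambda>j. a (e + j)) (\<lambda>j. b (e + j))"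
  by unfold_locales (simp_all add: a_Suc_le a_le_Suc a_le)

lemma gap_shifted: "row_profile.gap (\<lambda>j. a (e + j)) (\<lambda>j. b (e + j)) j = gap (e + j)"
  by (simp add: row_profile.gap_def[OF shifted] gap_def)

lemma gaps_shifted: "row_profile.gaps (\<lambda>j. a (e + j)) (\<lambda>j. b (e + j)) L = gaps L"
  unfolding row_profile.gaps_def[OF shifted] gap_shifted gaps_def
  by (rule sum_shift_periodic) (simp add: gap_def a_periodic b_periodic)

lemma sum_a_shifted: "(\<Sum>j<L. a (e + j)) = (\<Sum>y<L. a y)"
  by (rule sum_shift_periodic) (rule a_periodic)

context
  fixes l :: nat
  assumes l_pos: "1 \<le> l" and L_ge: "2 * l + 2 \<le> L"
    and sum_a_ge: "l^2 \<le> (\<Sum>y<L. a y)"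
      and sum_ab_le: "(\<Sum>y<L. a y) + (\<Sum>y<L. b y) \<le> 2 * l^2 + 2 * l + 1"
begin

lemma gaps_L_le: "gaps L \<le> 2 * l + 1"
  using sum_a_ge sum_ab_le sum_b[of L] by simp

lemma a_less_h: "a y < h"
proof (rule ccontr)
  assume "\<not> a y < h"
  then have "a (y + 0) = h" using a_le_h[of y] by simp
  interpret shifted: saturated_profile "\<lambda>j. a (y + j)" "\<lambda>j. b (y + j)" L h
  proof (unfold_locales)
    show "a (y + L) = h" using \<open>a (y + 0) = h\<close> a_periodic by simp
    show "row_profile.gaps (\<lambda>j. a (y + j)) (\<lambda>j. b (y + j)) L < L"
      using gaps_shifted gaps_L_le L_ge by simp
  qed (use \<open>a (y + 0) = h\<close> L_eq L_ge l_pos a_le_h gap_pos gap_shifted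
         a_Suc_le a_le_Suc a_le in auto)
  have "L^2 + 4 \<le> 4 * (\<Sum>y<L. b y)"
    using shifted.sum_b_ge sum_shift_periodic[of b L y] b_periodic by simp
  moreover have "(2 * l + 2)^2 \<le> L^2" using L_ge by (intro power_mono) auto
  ultimately show False
    using sum_a_ge sum_ab_le by (simp add: power2_eq_square algebra_simps)
qed

lemma ex_b_eq_0: "\<exists>e<L. b e = 0"
proof (rule ccontr)
  assume "\<not> (\<exists>e<L. b e = 0)"
  then have "0 < gap y" if "y < L" for y
    using that gap_pos[of y] a_less_h[of y] b_eq[of y] by (cases "a y = 0") auto
  then have "(\<Sum>y<L. 1) \<le> gaps L"
    unfolding gaps_def by (intro sum_mono) (simp add: Suc_le_eq)
  then show False using gaps_L_le L_ge by simp
qed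

lemma vanishing_shifted:
  assumes "b e = 0"
  shows "vanishing_profile (\<lambda>j. a (e + j)) (\<lambda>j. b (e + j)) L"
proof (rule vanishing_profile.intro[OF shifted], unfold_locales)
  show "b (e + 0) = 0" "b (e + L) = 0" using assms b_periodic[of e] by simp_all
  show "0 < row_profile.gap (\<lambda>j. a (e + j)) (\<lambda>j. b (e + j)) j" if "0 < a (e + j)" for j
    using that gap_pos a_less_h gap_shifted by simp
qed

lemma gaps_L_eq: "gaps L = 2 * l + 1" and sum_a_eq: "(\<Sum>y<L. a y) = l^2"
proof -
  obtain e where "b e = 0" using ex_b_eq_0 by blast
  interpret shifted: vanishing_profile "\<lambda>j. a (e + j)" "\<lambda>j. b (e + j)" L
    using vanishing_shifted[OF \<open>b e = 0\<close>] .
  have sum_le: "4 * (\<Sum>y<L. a y) \<le> (gaps L - 1)^2"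
    using shifted.sum_le_tent_sum four_tent_sum_le[of "gaps L"] sum_a_shifted gaps_shifted by simp
  show gaps_L: "gaps L = 2 * l + 1"
  proof (rule ccontr)
    assume "gaps L \<noteq> 2 * l + 1"
    then have "(gaps L - 1)^2 \<le> (2 * l - 1)^2" using gaps_L_le by (intro power_mono) auto
    also have "\<dots> < (2 * l)^2" using l_pos by (intro power_strict_mono) auto
    finally show False using sum_le sum_a_ge by (simp add: power_mult_distrib)
  qed
  show "(\<Sum>y<L. a y) = l^2"
    using sum_le sum_a_ge gaps_L by (simp add: power_mult_distrib)
qed

theorem tent_rows:
  "(\<Sum>y<L. a y) = l^2 \<and> (\<Sum>y<L. b y) = (l + 1)^2 \<and>
   (\<exists>y0. (\<forall>i. 1 \<le> i \<and> i \<le> 2 * l - 1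
     \<longrightarrow> a (y0 + i) = tent (2 * l + 1) i \<and> b (y0 + i) = a (y0 + i) + 1)
        \<and> (\<forall>y. 0 < a y
          \<longrightarrow> (\<exists>i. 1 \<le> i \<and> i \<le> 2 * l - 1
            \<and> y mod L = (y0 + i) mod L)))"
proof -
  obtain e where e: "e < L" "b e = 0" using ex_b_eq_0 by blast
  interpret shifted: vanishing_profile "\<lambda>j. a (e + j)" "\<lambda>j. b (e + j)" L
    using vanishing_shifted[OF e(2)] .
  have "tent_sum (gaps L) \<le> l^2"
    using four_tent_sum_le[of "gaps L"] gaps_L_eq by (simp add: power_mult_distrib)
  then have tight: "(\<Sum>j<L. a (e + j)) = tent_sum (shifted.gaps L)"
    using shifted.sum_le_tent_sum sum_a_shifted sum_a_eq gaps_shifted by simp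
  obtain y0 where
    shape: "\<And>i. 1 \<le> i \<Longrightarrow> i \<le> 2 * l - 1
        \<Longrightarrow> a (e + (y0 + i)) = tent (2 * l + 1) i
          \<and> b (e + (y0 + i)) = a (e + (y0 + i)) + 1"
    and supp: "\<And>j. j < L \<Longrightarrow> 0 < a (e + j)
        \<Longrightarrow> y0 < j \<and> j < y0 + 2 * l"
    using shifted.tent_profile[OF tight _ l_pos] gaps_L_eq gaps_shifted by auto
  have rows: "\<exists>i. 1 \<le> i \<and> i \<le> 2 * l - 1
      \<and> y mod L = (e + y0 + i) mod L" if "0 < a y" for y
  proof -
    define j where "j = (y + L - e) mod L"
    have "j < L" using e unfolding j_def by simp
    have ej: "(e + j) mod L = y mod L"
      using e unfolding j_def by (simp add: mod_add_right_eq)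
    then have "a (e + j) = a y" using periodic_mod[of a L, OF a_periodic] by metis
    then have "y0 < j \<and> j < y0 + 2 * l" using supp \<open>j < L\<close> that by simp
    then show ?thesis using ej by (intro exI[of _ "j - y0"]) (auto simp: add.assoc)
  qed
  have "a (e + y0 + i) = tent (2 * l + 1) i \<and> b (e + y0 + i) = a (e + y0 + i) + 1"
    if "1 \<le> i" "i \<le> 2 * l - 1" for i
    using shape[OF that] by (simp add: add.assoc)
  moreover have "(\<Sum>y<L. b y) = (l + 1)^2"
    using sum_a_eq sum_b[of L] gaps_L_eq by (simp add: power2_eq_square)
  ultimately show ?thesis using sum_a_eq rows by blast
qed

end

end

section \<open>Rhombi\<close>

definition torus_coord :: "nat \<Rightarrow> int \<Rightarrow> nat" where
  "torus_coord L X = nat (X mod int L)"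

definition torus_pt :: "nat \<Rightarrow> int \<Rightarrow> int \<Rightarrow> site" where
  "torus_pt L X Y = (torus_coord L X, torus_coord L Y)"

lemma torus_coord_less: "0 < L \<Longrightarrow> torus_coord L X < L"
  unfolding torus_coord_def by (simp add: nat_less_iff)

lemma int_torus_coord: "0 < L \<Longrightarrow> int (torus_coord L X) = X mod int L"
  unfolding torus_coord_def by simp

lemma torus_coord_eq_iff: "0 < L
    \<Longrightarrow> torus_coord L X = torus_coord L X'
      \<longleftrightarrow> X mod int L = X' mod int L"
  using int_torus_coord by (metis of_nat_eq_iff)

lemma torus_coord_of_nat: "torus_coord L (int x) = x mod L"
  unfolding torus_coord_def by (simp add: zmod_int[symmetric])

lemma Suc_mod_torus_coord: "0 < L
    \<Longrightarrow> Suc (torus_coord L X) mod L = torus_coord L (X + 1)"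
proof -
  assume L: "0 < L"
  have "int (Suc (torus_coord L X) mod L) = (X mod int L + 1) mod int L"
    using L by (simp add: of_nat_mod int_torus_coord add.commute)
  also have "\<dots> = (X + 1) mod int L" by (simp add: mod_add_left_eq)
  finally show ?thesis using L by (simp add: int_torus_coord[symmetric])
qed

lemma pred_mod_torus_coord: "0 < L
    \<Longrightarrow> (torus_coord L X + L - Suc 0) mod L = torus_coord L (X - 1)"
proof -
  assume L: "0 < L"
  have "int ((torus_coord L X + L - 1) mod L) = (X mod int L + (int L - 1)) mod int L"
    using L by (simp add: of_nat_mod of_nat_diff int_torus_coord algebra_simps)
  also have "\<dots> = (X + (int L - 1)) mod int L" by (rule mod_add_left_eq)
  also have "\<dots> = ((X - 1) + int L) mod int L" by (simp add: algebra_simps)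
  also have "\<dots> = (X - 1) mod int L" by simp
  finally show ?thesis using L by (simp add: int_torus_coord[symmetric])
qed

lemma even_torus_coord: "even L \<Longrightarrow> 0 < L
    \<Longrightarrow> even (torus_coord L X) \<longleftrightarrow> even X"
  using even_mod_iff[of "int L" X] by (simp add: int_torus_coord[symmetric])

lemma torus_pt_sites: "0 < L \<Longrightarrow> torus_pt L X Y \<in> sites L"
  unfolding torus_pt_def sites_def by (simp add: torus_coord_less)

lemma torus_pt_eq_iff:
  "0 < L \<Longrightarrow> torus_pt L X Y = torus_pt L X' Y'
      \<longleftrightarrow> X mod int L = X' mod int L \<and> Y mod int L = Y' mod int L"
  unfolding torus_pt_def using torus_coord_eq_iff by simp

lemma adj_torus_pt_iff:
  assumes "2 \<le> L"
  shows "adj L (torus_pt L X Y) w \<longleftrightarrow>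
    w \<in> {torus_pt L (X + 1) Y, torus_pt L (X - 1) Y, torus_pt L X (Y + 1), torus_pt L X (Y - 1)}"
proof -
  have "0 < L" using assms by simp
  then show ?thesis
    using adj_iff[OF assms, of "torus_coord L X" "torus_coord L Y" w]
    by (simp add: torus_pt_def torus_coord_less Suc_mod_torus_coord pred_mod_torus_coord)
qed

lemma torus_pt_parity:
  assumes "even L" "0 < L"
  shows "torus_pt L X Y \<in> odd_sites L \<longleftrightarrow> odd (X + Y)"
  using torus_pt_sites[OF assms(2)] even_torus_coord[OF assms]
  unfolding odd_sites_def torus_pt_def by simp

lemma rhombus_core_eq:
  "rhombus_core L l1 l2 \<eta> =
    (\<lambda>(k, j). torus_pt L (int (fst \<eta>) + int k + int j) (int (snd \<eta>) + int k - int j)) ` ({..<l1} \<times> {..<l2})"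
  unfolding rhombus_core_def torus_pt_def torus_coord_def by auto

lemma finite_rhombus_core: "finite (rhombus_core L l1 l2 \<eta>)"
  unfolding rhombus_core_eq by simp

lemma small_dvd_imp_zero:
  fixes z :: int
  assumes "int L dvd z" "\<bar>z\<bar> < int L"
  shows "z = 0"
proof (rule ccontr)
  assume "z \<noteq> 0"
  then have "\<bar>int L\<bar> \<le> \<bar>z\<bar>" using dvd_imp_le_int assms(1) by blast
  then show False using assms(2) by simp
qed

lemma card_rhombus_core:
  assumes "2 * l < L"
  shows "card (rhombus_core L l l \<eta>) = l^2"
proof -
  let ?f = "\<lambda>(k, j). torus_pt L (int (fst \<eta>) + int k + int j) (int (snd \<eta>) + int k - int j)"
  have "inj_on ?f ({..<l} \<times> {..<l})"
  proof (rule inj_onI, clarsimp)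
    fix k j k' j' assume kj: "k < l" "j < l" "k' < l" "j' < l"
      and "torus_pt L (int (fst \<eta>) + int k + int j) (int (snd \<eta>) + int k - int j) =
           torus_pt L (int (fst \<eta>) + int k' + int j') (int (snd \<eta>) + int k' - int j')"
    then have "int L dvd (int k + int j) - (int k' + int j')" "int L dvd (int k - int j) - (int k' - int j')"
      using torus_pt_eq_iff[of L] assms by (simp_all add: mod_eq_dvd_iff algebra_simps)
    then have "int L dvd ((int k + int j) - (int k' + int j')) + ((int k - int j) - (int k' - int j'))"
      by (rule dvd_add)
    then have "int L dvd 2 * (int k - int k')" by (simp add: algebra_simps)
    moreover have "\<bar>2 * (int k - int k')\<bar> < int L" using kj assms by auto
    ultimately have "2 * (int k - int k') = 0" by (rule small_dvd_imp_zero)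
    then have "k = k'" by simp
    have "int L dvd (int j - int j')"
      using \<open>int L dvd (int k + int j) - (int k' + int j')\<close> \<open>k = k'\<close>
        by (simp add: algebra_simps)
    moreover have "\<bar>int j - int j'\<bar> < int L" using kj assms by auto
    ultimately have "int j - int j' = 0" by (rule small_dvd_imp_zero)
    then show "k = k' \<and> j = j'" using \<open>k = k'\<close> by simp
  qed
  then have "card (rhombus_core L l l \<eta>) = card ({..<l} \<times> {..<l})"
    unfolding rhombus_core_eq by (rule card_image)
  then show ?thesis by (simp add: power2_eq_square)
qed

lemma torus_pt_cong: "X mod int L = X' mod int L
    \<Longrightarrow> Y mod int L = Y' mod int L
      \<Longrightarrow> torus_pt L X Y = torus_pt L X' Y'"
  unfolding torus_pt_def torus_coord_def by simp

lemma rhombus_core_torus_pt: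
  assumes "0 < L"
  shows "rhombus_core L l1 l2 (torus_pt L X Y) =
    {torus_pt L (X + int k + int j) (Y + int k - int j) | k j. k < l1 \<and> j < l2}"
proof -
  have "torus_pt L (int (torus_coord L X) + int k + int j) (int (torus_coord L Y) + int k - int j) =
      torus_pt L (X + int k + int j) (Y + int k - int j)" for k j
    using assms mod_add_left_eq[of X "int L" "int k + int j"] mod_add_left_eq[of Y "int L" "int k - int j"]
    by (intro torus_pt_cong) (simp_all add: int_torus_coord add.assoc add_diff_eq)
  then show ?thesis unfolding rhombus_core_eq by (auto simp: torus_pt_def)
qed

lemma rhombus_core_subset_odd_sites:
  assumes "even L" "0 < L" "\<eta> \<in> odd_sites L"
  shows "rhombus_core L l1 l2 \<eta> \<subseteq> odd_sites L"
proof
  fix v assume "v \<in> rhombus_core L l1 l2 \<eta>"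
  then obtain k j :: nat where v: "v
      = torus_pt L (int (fst \<eta>) + int k + int j) (int (snd \<eta>) + int k - int j)"
    unfolding rhombus_core_eq by auto
  have "odd (fst \<eta> + snd \<eta>)" using assms(3) unfolding odd_sites_def by simp
  moreover have "(int (fst \<eta>) + int k + int j) + (int (snd \<eta>) + int k - int j)
      = int (fst \<eta> + snd \<eta>) + 2 * int k"
    by simp
  ultimately have "odd ((int (fst \<eta>) + int k + int j) + (int (snd \<eta>) + int k - int j))"
    by (simp only:) simp
  then show "v \<in> odd_sites L" unfolding v using torus_pt_parity[OF assms(1,2)] by blast
qed

lemma card_ext_boundary_rhombus_core:
  assumes "2 \<le> L"
  shows "card (ext_boundary L (rhombus_core L l l \<eta>)) \<le> (l + 1)^2"
proof -
  let ?g = "\<lambda>(k, j). torus_pt L (int (fst \<eta>) + int k + int j - 1) (int (snd \<eta>) + int k - int j)"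
  have "ext_boundary L (rhombus_core L l l \<eta>) \<subseteq> ?g ` ({..<l + 1} \<times> {..<l + 1})"
  proof
    fix w assume "w \<in> ext_boundary L (rhombus_core L l l \<eta>)"
    then obtain k j where kj: "k < l" "j < l"
      and "adj L (torus_pt L (int (fst \<eta>) + int k + int j) (int (snd \<eta>) + int k - int j)) w"
      unfolding ext_boundary_def rhombus_core_eq by auto
    then have "w \<in> {?g (k + 1, j + 1), ?g (k, j), ?g (k + 1, j), ?g (k, j + 1)}"
      unfolding adj_torus_pt_iff[OF assms] by (simp add: algebra_simps)
    moreover have "{(k + 1, j + 1), (k, j), (k + 1, j), (k, j + 1)} \<subseteq> {..<l + 1} \<times> {..<l + 1}"
      using kj by auto
    ultimately show "w \<in> ?g ` ({..<l + 1} \<times> {..<l + 1})" by blast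
  qed
  then have "card (ext_boundary L (rhombus_core L l l \<eta>))
      \<le> card (?g ` ({..<l + 1} \<times> {..<l + 1}))"
    by (rule card_mono[rotated]) simp
  also have "\<dots> \<le> (l + 1)^2"
    using card_image_le[of "{..<l + 1} \<times> {..<l + 1}" ?g] by (simp add: power2_eq_square)
  finally show ?thesis .
qed

lemma components_with_boundary:
  assumes "v0 \<in> S" "\<And>s. s \<in> S
      \<Longrightarrow> (v0, s) \<in> (adj_within L (S \<union> ext_boundary L S))\<^sup>*"
  shows "components L (S \<union> ext_boundary L S) = {S \<union> ext_boundary L S}"
proof (rule components_eq_singletonI)
  let ?R = "S \<union> ext_boundary L S"
  fix w assume "w \<in> ?R"
  show "(v0, w) \<in> (adj_within L ?R)\<^sup>*"
  proof (cases "w \<in> S")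
    case False
    then obtain s where "s \<in> S" "adj L s w"
      using \<open>w \<in> ?R\<close> unfolding ext_boundary_def by auto
    then have "(s, w) \<in> adj_within L ?R"
      using \<open>w \<in> ?R\<close> unfolding adj_within_def by auto
    with assms(2)[OF \<open>s \<in> S\<close>] show ?thesis by (rule rtrancl_into_rtrancl)
  qed (use assms(2) in blast)
qed (use assms(1) in blast)

definition rhombus_cell :: "nat \<Rightarrow> site \<Rightarrow> nat \<Rightarrow> nat \<Rightarrow> site" where
  "rhombus_cell L \<eta> k j = torus_pt L (int (fst \<eta>) + int k + int j) (int (snd \<eta>) + int k - int j)"

lemma rhombus_cell_mem: "k < l1 \<Longrightarrow> j < l2
    \<Longrightarrow> rhombus_cell L \<eta> k j \<in> rhombus_core L l1 l2 \<eta>"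
  unfolding rhombus_core_eq rhombus_cell_def by force

lemma rhombus_core_eq_cells: "rhombus_core L l1 l2 \<eta>
    = {rhombus_cell L \<eta> k j | k j. k < l1 \<and> j < l2}"
  unfolding rhombus_core_eq rhombus_cell_def by auto

text \<open>Neighbouring rhombus cells are two apart and joined through a boundary site.\<close>

lemma rhombus_cell_steps:
  assumes "even L" "2 \<le> L" "\<eta> \<in> odd_sites L"
  shows "Suc k < l \<Longrightarrow> j < l \<Longrightarrow>
      (rhombus_cell L \<eta> k j, rhombus_cell L \<eta> (Suc k) j)
        \<in> (adj_within L (rhombus L l l \<eta>))\<^sup>*"
    and "k < l \<Longrightarrow> Suc j < l \<Longrightarrow>
      (rhombus_cell L \<eta> k j, rhombus_cell L \<eta> k (Suc j))
        \<in> (adj_within L (rhombus L l l \<eta>))\<^sup>*"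
proof -
  let ?S = "rhombus_core L l l \<eta>"
  have odd: "rhombus_core L l l \<eta> \<subseteq> odd_sites L"
    using rhombus_core_subset_odd_sites[OF assms(1) _ assms(3)] assms(2) by simp
  have via: "(rhombus_cell L \<eta> k j, c') \<in> (adj_within L (rhombus L l l \<eta>))\<^sup>*"
    if "k < l" "j < l" "c' \<in> ?S" "adj L (rhombus_cell L \<eta> k j) m" "adj L m c'" for k j m c'
  proof -
    have "m \<in> ext_boundary L ?S"
      using ext_boundary_memI[OF assms(1,2) odd rhombus_cell_mem[OF that(1,2)] that(4)] .
    then have "(rhombus_cell L \<eta> k j, m) \<in> adj_within L (rhombus L l l \<eta>)"
      "(m, c') \<in> adj_within L (rhombus L l l \<eta>)"
      using that rhombus_cell_mem unfolding adj_within_def rhombus_def by auto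
    then show ?thesis by simp
  qed
  let ?X = "int (fst \<eta>) + int k + int j" and ?Y = "int (snd \<eta>) + int k - int j"
  have "adj L (rhombus_cell L \<eta> k j) (torus_pt L ?X (?Y + 1))"
    "adj L (torus_pt L ?X (?Y + 1)) (rhombus_cell L \<eta> (Suc k) j)"
    "adj L (rhombus_cell L \<eta> k j) (torus_pt L ?X (?Y - 1))"
      "adj L (torus_pt L ?X (?Y - 1)) (rhombus_cell L \<eta> k (Suc j))"
    unfolding rhombus_cell_def by (simp_all add: adj_torus_pt_iff[OF assms(2)] algebra_simps)
  then show "Suc k < l \<Longrightarrow> j < l
      \<Longrightarrow> (rhombus_cell L \<eta> k j, rhombus_cell L \<eta> (Suc k) j)
        \<in> (adj_within L (rhombus L l l \<eta>))\<^sup>*"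
    and "k < l \<Longrightarrow> Suc j < l
        \<Longrightarrow> (rhombus_cell L \<eta> k j, rhombus_cell L \<eta> k (Suc j))
          \<in> (adj_within L (rhombus L l l \<eta>))\<^sup>*"
    using via rhombus_cell_mem by auto
qed

lemma components_rhombus:
  assumes "even L" "2 \<le> L" "\<eta> \<in> odd_sites L" "1 \<le> l"
  shows "components L (rhombus L l l \<eta>) = {rhombus L l l \<eta>}"
proof -
  let ?R = "rhombus L l l \<eta>" and ?cell = "rhombus_cell L \<eta>"
  note steps = rhombus_cell_steps[OF assms(1-3)]
  have "(?cell 0 0, ?cell 0 j) \<in> (adj_within L ?R)\<^sup>*" if "j < l" for j
    using that
  proof (induction j)
    case (Suc j)
    then show ?case using steps(2)[of 0 l j] by (auto intro: rtrancl_trans)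
  qed simp
  moreover have "(?cell 0 j, ?cell k j) \<in> (adj_within L ?R)\<^sup>*" if "k < l" "j < l" for k j
    using that
  proof (induction k)
    case (Suc k)
    then show ?case using steps(1)[of k l j] by (auto intro: rtrancl_trans)
  qed simp
  ultimately have "(?cell 0 0, s) \<in> (adj_within L ?R)\<^sup>*" if "s \<in> rhombus_core L l l \<eta>" for s
    using that unfolding rhombus_core_eq_cells by (blast intro: rtrancl_trans)
  then show ?thesis
    unfolding rhombus_def using components_with_boundary[of "?cell 0 0"] rhombus_cell_mem assms(4)
    by (simp add: rhombus_def)
qed

definition row_segment :: "nat \<Rightarrow> int \<Rightarrow> nat \<Rightarrow> nat set" where
  "row_segment L c t = {torus_coord L (c - int t + 1 + 2 * int m) | m. m < t}"

lemma row_nbrs_row_segment: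
  assumes "0 < L"
  shows "row_nbrs L (row_segment L c t) \<subseteq> row_segment L c (Suc t)"
proof
  fix z assume "z \<in> row_nbrs L (row_segment L c t)"
  then obtain m where m: "m < t"
    and "z = torus_coord L (c - int t + 1 + 2 * int m + 1)
        \<or> z = torus_coord L (c - int t + 1 + 2 * int m - 1)"
    unfolding row_nbrs_def row_segment_def
    by (auto simp: Suc_mod_torus_coord[OF assms] pred_mod_torus_coord[OF assms])
  then have "z = torus_coord L (c - int (Suc t) + 1 + 2 * int (Suc m))
      \<or> z = torus_coord L (c - int (Suc t) + 1 + 2 * int m)"
    by (auto simp: algebra_simps)
  then show "z \<in> row_segment L c (Suc t)" unfolding row_segment_def using m by fastforce
qed

lemma row_segment_erode:
  assumes L: "0 < L" and "x < L" "2 * t + 2 \<le> L"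
    and "Suc x mod L \<in> row_segment L c t" "(x + L - 1) mod L \<in> row_segment L c t"
  shows "x \<in> row_segment L c (t - 1)"
proof -
  have x: "torus_coord L (int x) = x" using assms(2) by (simp add: torus_coord_of_nat)
  obtain m where m: "m < t" "torus_coord L (int x + 1) = torus_coord L (c - int t + 1 + 2 * int m)"
    using assms(4) Suc_mod_torus_coord[OF L, of "int x"] unfolding row_segment_def x by auto
  obtain m' where m': "m' < t" "torus_coord L (int x - 1) = torus_coord L (c - int t + 1 + 2 * int m')"
    using assms(5) pred_mod_torus_coord[OF L, of "int x"] unfolding row_segment_def x by auto
  have "int L dvd (int x + 1) - (c - int t + 1 + 2 * int m)"
    "int L dvd (int x - 1) - (c - int t + 1 + 2 * int m')"
    using m(2) m'(2) unfolding torus_coord_eq_iff[OF L] by (simp_all add: mod_eq_dvd_iff)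
  then have "int L dvd ((int x + 1) - (c - int t + 1 + 2 * int m)) - ((int x - 1) - (c - int t + 1 + 2 * int m'))"
    by (rule dvd_diff)
  then have "int L dvd 2 * (int m' - int m + 1)" by (simp add: algebra_simps)
  moreover have "\<bar>2 * (int m' - int m + 1)\<bar> < int L" using m(1) m'(1) assms(3) by auto
  ultimately have "2 * (int m' - int m + 1) = 0" by (rule small_dvd_imp_zero)
  then have "m' < t - 1" using m(1) by simp
  moreover have "torus_coord L (int x) = torus_coord L (c - int (t - 1) + 1 + 2 * int m')"
  proof -
    have "torus_coord L (int x) = torus_coord L ((int x - 1) + 1)" by simp
    also have "\<dots> = torus_coord L ((c - int t + 1 + 2 * int m') + 1)"
      using m'(2) torus_coord_eq_iff[OF L] by (metis mod_add_left_eq)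
    also have "(c - int t + 1 + 2 * int m') + 1 = c - int (t - 1) + 1 + 2 * int m'" using m(1) by simp
    finally show ?thesis .
  qed
  ultimately show ?thesis unfolding row_segment_def x by blast
qed

text \<open>The rhombus whose lowest row y0 + 1 is the single site in column c meets row y0 + i
  in the segment of t sites centred at c, where t grows from 1 to l and shrinks back to 1.\<close>

lemma row_segment_in_rhombus:
  assumes "0 < L" "1 \<le> i" "i \<le> 2 * l - 1" "t = (if i \<le> l then i else 2 * l - i)" "m < t"
  shows "torus_pt L (c - int t + 1 + 2 * int m) (int (y0 + i))
      \<in> rhombus_core L l l (torus_pt L (c - int l + 1) (int (y0 + l)))"
proof -
  obtain k j where kj: "k < l" "j < l" "int k + int j = int l - int t + 2 * int m"
    "int k - int j = int i - int l"
  proof (cases "i \<le> l")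
    case True
    then have "m < l - i + m + 1 \<and> l - i + m < l" "int (l - i + m) = int l - int i + int m"
      using assms(4,5) by auto
    then show ?thesis using that[of m "l - i + m"] True assms(4,5) by simp
  next
    case False
    then have "i - l + m < l" "int (i - l + m) = int i - int l + int m" "t = 2 * l - i"
      "int (2 * l - i) = 2 * int l - int i"
      using assms(3-5) by auto
    then show ?thesis using that[of "i - l + m" m] assms(5) by simp
  qed
  have "c - int t + 1 + 2 * int m = (c - int l + 1) + int k + int j" using kj(3) by linarith
  moreover have "int (y0 + i) = int (y0 + l) + int k - int j" using kj(4) by simp
  ultimately have "torus_pt L (c - int t + 1 + 2 * int m) (int (y0 + i)) =
      torus_pt L ((c - int l + 1) + int k + int j) (int (y0 + l) + int k - int j)"
    by (simp only:)
  then show ?thesis unfolding rhombus_core_torus_pt[OF assms(1)] using kj(1,2) by blast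
qed

section \<open>The isoperimetric inequality for odd sets\<close>

context odd_set
begin

lemma L_pos: "0 < L"
  using L_ge_4 by simp

lemma boundary_sites: "ext_boundary L K \<subseteq> sites L"
  unfolding ext_boundary_def by auto

lemma card_row_le_boundary: "card (row L K y) \<le> card (row L (ext_boundary L K) y)"
  using card_le_card_row_nbrs[OF row_subset_lessThan[OF K_sites]]
    card_mono[OF finite_row[OF boundary_sites] row_nbrs_subset] by (rule le_trans)

lemma card_row_less_boundary:
  assumes "0 < card (row L K y)" "card (row L K y) < L div 2"
  shows "card (row L K y) + 1 \<le> card (row L (ext_boundary L K) y)"
proof -
  have "row L K y \<noteq> {}" using assms(1) by auto
  from card_row_nbrs_gt[OF even_L row_parity_class this assms(2)]
    card_mono[OF finite_row[OF boundary_sites] row_nbrs_subset[of y]]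
  show ?thesis by (rule le_trans)
qed

lemma row_profile: "row_profile (\<lambda>y. card (row L K y)) (\<lambda>y. card (row L (ext_boundary L K) y))"
proof
  show "card (row L K (Suc y)) \<le> card (row L (ext_boundary L K) y)" for y
    using card_mono[OF finite_row[OF boundary_sites] row_Suc_subset] .
  show "card (row L K y) \<le> card (row L (ext_boundary L K) (Suc y))" for y
    using card_mono[OF finite_row[OF boundary_sites] row_subset_Suc] .
qed (rule card_row_le_boundary)

lemma torus_profile:
  "torus_profile (\<lambda>y. card (row L K y)) (\<lambda>y. card (row L (ext_boundary L K) y)) L (L div 2)"
proof (rule torus_profile.intro[OF row_profile], unfold_locales)
  show "0 < row_profile.gap (\<lambda>y. card (row L K y)) (\<lambda>y. card (row L (ext_boundary L K) y)) y"
    if "0 < card (row L K y)" "card (row L K y) < L div 2" for y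
    using card_row_less_boundary[OF that] by (simp add: row_profile.gap_def[OF row_profile])
qed (simp_all add: card_row_le even_L)

definition tent_shaped :: "nat \<Rightarrow> nat \<Rightarrow> bool" where
  "tent_shaped l y0 \<longleftrightarrow> (\<forall>i. 1 \<le> i
      \<and> i \<le> 2 * l - 1 \<longrightarrow>
     card (row L K (y0 + i)) = tent (2 * l + 1) i \<and>
     card (row L (ext_boundary L K) (y0 + i)) = card (row L K (y0 + i)) + 1)"

lemma row_Suc_subset_row_nbrs:
  assumes "0 < card (row L K y)" "card (row L K y) < L div 2"
    and "card (row L (ext_boundary L K) y) = card (row L K y) + 1"
  shows "row L K (Suc y) \<subseteq> row_nbrs L (row L K y)"
proof -
  have "row L K y \<noteq> {}" using assms(1) by auto
  from card_row_nbrs_gt[OF even_L row_parity_class this assms(2)]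
  have "row_nbrs L (row L K y) = row L (ext_boundary L K) y"
    using card_subset_eq[OF finite_row[OF boundary_sites] row_nbrs_subset]
      card_mono[OF finite_row[OF boundary_sites] row_nbrs_subset[of y]] assms(3) by simp
  then show ?thesis using row_Suc_subset by simp
qed

lemma row_nbrs_Suc_subset:
  assumes "card (row L (ext_boundary L K) (Suc y)) = card (row L K y)"
  shows "row_nbrs L (row L K (Suc y)) \<subseteq> row L K y"
proof -
  have "row L K y = row L (ext_boundary L K) (Suc y)"
    using card_subset_eq[OF finite_row[OF boundary_sites] row_subset_Suc] assms by simp
  then show ?thesis using row_nbrs_subset[of "Suc y"] by simp
qed

lemma tent_rows_upper:
  assumes "tent_shaped l y0" "2 * l + 2 \<le> L" "row L K (y0 + 1) = {x0}" "1 \<le> i" "i \<le> l"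
  shows "row L K (y0 + i) \<subseteq> row_segment L (int x0) i"
  using assms(4,5)
proof (induction i rule: dec_induct)
  case base
  have "x0 < L" using assms(3) row_subset_lessThan[OF K_sites, of "y0 + 1"] by auto
  then show ?case using assms(3) unfolding row_segment_def by (simp add: torus_coord_of_nat)
next
  case (step i)
  have "card (row L K (y0 + i)) = i" "card (row L (ext_boundary L K) (y0 + i)) = i + 1"
    using assms(1) step unfolding tent_shaped_def tent_def by auto
  moreover have "i < L div 2" using step assms(2) by linarith
  ultimately have "row L K (y0 + Suc i) \<subseteq> row_nbrs L (row L K (y0 + i))"
    using row_Suc_subset_row_nbrs[of "y0 + i"] step by simp
  also have "\<dots> \<subseteq> row_nbrs L (row_segment L (int x0) i)"
    using step by (intro row_nbrs_mono) simp
  also have "\<dots> \<subseteq> row_segment L (int x0) (Suc i)"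
    by (rule row_nbrs_row_segment[OF L_pos])
  finally show ?case by simp
qed

lemma tent_rows_lower:
  assumes "tent_shaped l y0" "2 * l + 2 \<le> L" "row L K (y0 + 1) = {x0}" "1 \<le> l" "l + d \<le> 2 * l - 1"
  shows "row L K (y0 + l + d) \<subseteq> row_segment L (int x0) (l - d)"
  using assms(5)
proof (induction d)
  case 0
  then show ?case using tent_rows_upper[OF assms(1-3), of l] assms(4) by simp
next
  case (Suc d)
  let ?y = "y0 + l + d"
  have "card (row L K ?y) = 2 * l - (l + d)" "card (row L K (Suc ?y)) = 2 * l - (l + d) - 1"
    "card (row L (ext_boundary L K) (Suc ?y)) = 2 * l - (l + d)"
    using assms(1,4) Suc.prems unfolding tent_shaped_def tent_def
    by (auto dest!: spec[of _ "l + d"] spec[of _ "Suc (l + d)"] simp: add.assoc)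
  then have "row_nbrs L (row L K (Suc ?y)) \<subseteq> row_segment L (int x0) (l - d)"
    using row_nbrs_Suc_subset[of ?y] Suc by simp
  then have "x \<in> row_segment L (int x0) (l - d - 1)" if "x \<in> row L K (Suc ?y)" for x
    using that row_subset_lessThan[OF K_sites] assms(2) unfolding row_nbrs_def
    by (intro row_segment_erode[OF L_pos]) auto
  then show ?case by (auto simp: add.assoc)
qed

lemma tent_rows_subset_rhombus_core:
  assumes "tent_shaped l y0" "2 * l + 2 \<le> L" "row L K (y0 + 1) = {x0}" "1 \<le> l"
    and supp: "\<And>y. row L K y \<noteq> {}
        \<Longrightarrow> \<exists>i. 1 \<le> i \<and> i \<le> 2 * l - 1
          \<and> y mod L = (y0 + i) mod L"
  shows "K \<subseteq> rhombus_core L l l (torus_pt L (int x0 - int l + 1) (int (y0 + l)))"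
proof
  fix v assume "v \<in> K"
  then obtain x y where v: "v = (x, y)" "y < L" and "x \<in> row L K y"
    using K_sites unfolding row_def sites_def by auto
  then obtain i where i: "1 \<le> i" "i \<le> 2 * l - 1" "y mod L = (y0 + i) mod L"
    using supp by blast
  then have "x \<in> row L K (y0 + i)"
    using \<open>x \<in> row L K y\<close> row_mod[of L K y] row_mod[of L K "y0 + i"] by metis
  define t where "t = (if i \<le> l then i else 2 * l - i)"
  have "row L K (y0 + i) \<subseteq> row_segment L (int x0) t"
  proof (cases "i \<le> l")
    case False
    then have "y0 + l + (i - l) = y0 + i" "l - (i - l) = t" unfolding t_def by auto
    then show ?thesis
      using tent_rows_lower[OF assms(1-4), of "i - l"] i False by simp
  qed (use tent_rows_upper[OF assms(1-3)] i t_def in simp)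
  then obtain m where "m < t" "x = torus_coord L (int x0 - int t + 1 + 2 * int m)"
    using \<open>x \<in> row L K (y0 + i)\<close> unfolding row_segment_def by auto
  moreover have "y = torus_coord L (int (y0 + i))"
    using i(3) v(2) torus_coord_of_nat[of L "y0 + i"] by simp
  ultimately show "v \<in> rhombus_core L l l (torus_pt L (int x0 - int l + 1) (int (y0 + l)))"
    using row_segment_in_rhombus[OF L_pos i(1,2) t_def] unfolding v torus_pt_def by simp
qed

theorem isoperimetric:
  assumes "1 \<le> l" "2 * l + 2 \<le> L" "l^2 \<le> card K"
    and "card K + card (ext_boundary L K) \<le> 2 * l^2 + 2 * l + 1"
  shows "card K = l^2 \<and> card (ext_boundary L K) = (l + 1)^2
      \<and> (\<exists>\<eta>\<in>odd_sites L. K = rhombus_core L l l \<eta>)"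
proof -
  interpret rows: torus_profile "\<lambda>y. card (row L K y)"
    "\<lambda>y. card (row L (ext_boundary L K) y)" L "L div 2"
    by (rule torus_profile)
  note card_K = card_eq_sum_rows[OF K_sites] and card_boundary = card_eq_sum_rows[OF boundary_sites]
  obtain y0 where "tent_shaped l y0"
    and supp: "\<And>y. 0 < card (row L K y)
        \<Longrightarrow> \<exists>i. 1 \<le> i \<and> i \<le> 2 * l - 1
          \<and> y mod L = (y0 + i) mod L"
    and sums: "card K = l^2" "card (ext_boundary L K) = (l + 1)^2"
    using rows.tent_rows[OF assms(1,2)] assms(3,4)
      unfolding card_K card_boundary tent_shaped_def by auto
  have "card (row L K (y0 + 1)) = 1"
    using \<open>tent_shaped l y0\<close> assms(1) unfolding tent_shaped_def tent_def by auto
  then obtain x0 where x0: "row L K (y0 + 1) = {x0}" by (rule card_1_singletonE)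
  let ?\<eta> = "torus_pt L (int x0 - int l + 1) (int (y0 + l))"
  have "K \<subseteq> rhombus_core L l l ?\<eta>"
    using tent_rows_subset_rhombus_core[OF \<open>tent_shaped l y0\<close> assms(2) x0 assms(1)] supp
    by (simp add: card_gt_0_iff finite_row[OF K_sites])
  then have "K = rhombus_core L l l ?\<eta>"
    using card_rhombus_core[of l L] assms(2) sums(1)
      by (intro card_subset_eq[OF finite_rhombus_core]) auto
  moreover have "?\<eta> \<in> odd_sites L"
  proof -
    have "(x0, (y0 + 1) mod L) \<in> odd_sites L" using x0 K_odd unfolding row_def by auto
    then have "odd (int x0 + int (y0 + 1))"
      using even_mod_iff[OF even_L, of "y0 + 1"] unfolding odd_sites_def by simp
    then show ?thesis using torus_pt_parity[OF even_L L_pos] by simp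
  qed
  ultimately show ?thesis using sums by blast
qed

end

section \<open>Minimal perimeter configurations\<close>

lemma perimeter_eq_area:
  assumes "even L" "4 \<le> L" "\<sigma> \<in> hardcore L"
  shows "perimeter L \<sigma> + 8 * card (odd_occupied L \<sigma>) = 4 * real_area L \<sigma>"
  using perimeter_formula[OF assms] unfolding real_area_def by simp

lemma odd_set_odd_occupied: "even L \<Longrightarrow> 4 \<le> L
    \<Longrightarrow> odd_set L (odd_occupied L \<sigma>)"
  by unfold_locales auto

lemma card_boundary_odd_occupied_le:
  assumes "even L" "4 \<le> L" "\<sigma> \<in> hardcore L"
  shows "card (odd_occupied L \<sigma>) + card (ext_boundary L (odd_occupied L \<sigma>))
      \<le> real_area L \<sigma>"
  using card_mono[OF finite_even_vacant ext_boundary_odd_occupied[OF assms(1) _ assms(3)]] assms(2)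
  unfolding real_area_def by simp

lemma card_odd_occupied_le:
  assumes "even L" "4 \<le> L" "1 \<le> l" "2 * l + 2 \<le> L"
    and "\<sigma> \<in> hardcore L" "real_area L \<sigma> = 2 * l^2 + 2 * l + 1"
  shows "card (odd_occupied L \<sigma>) \<le> l^2"
proof (rule ccontr)
  assume "\<not> card (odd_occupied L \<sigma>) \<le> l^2"
  then show False
    using odd_set.isoperimetric[OF odd_set_odd_occupied[OF assms(1,2), of \<sigma>] assms(3,4)]
      card_boundary_odd_occupied_le[OF assms(1,2,5)] assms(6) by simp
qed

lemma odd_region_eq_rhombus:
  assumes "even L" "4 \<le> L" "1 \<le> l" "2 * l + 2 \<le> L"
    and "\<sigma> \<in> hardcore L" "real_area L \<sigma> = 2 * l^2 + 2 * l + 1"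
      "card (odd_occupied L \<sigma>) = l^2"
  shows "\<exists>\<eta>\<in>odd_sites L. odd_region L \<sigma> = rhombus L l l \<eta>"
proof -
  obtain \<eta> where \<eta>: "\<eta> \<in> odd_sites L" "odd_occupied L \<sigma> = rhombus_core L l l \<eta>"
    and boundary: "card (ext_boundary L (odd_occupied L \<sigma>)) = (l + 1)^2"
    using odd_set.isoperimetric[OF odd_set_odd_occupied[OF assms(1,2), of \<sigma>] assms(3,4)]
      card_boundary_odd_occupied_le[OF assms(1,2,5)] assms(6,7) by auto
  have "card (even_vacant L \<sigma>) = (l + 1)^2"
    using assms(6,7) unfolding real_area_def by (simp add: power2_eq_square algebra_simps)
  then have "ext_boundary L (odd_occupied L \<sigma>) = even_vacant L \<sigma>"
    using card_subset_eq[OF finite_even_vacant ext_boundary_odd_occupied[OF assms(1) _ assms(5)]] boundary assms(2)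
    by simp
  then have "odd_region L \<sigma> = rhombus L l l \<eta>"
    unfolding odd_region_def rhombus_def \<eta>(2)[symmetric] by simp
  then show ?thesis using \<eta>(1) by blast
qed

lemma card_odd_occupied_rhombus:
  assumes "even L" "4 \<le> L" "2 * l < L" "\<eta> \<in> odd_sites L"
    "odd_region L \<sigma> = rhombus L l l \<eta>"
  shows "card (odd_occupied L \<sigma>) = l^2"
proof -
  have "rhombus_core L l l \<eta> \<subseteq> odd_sites L"
    "ext_boundary L (rhombus_core L l l \<eta>) \<subseteq> even_sites L"
    using rhombus_core_subset_odd_sites[OF assms(1) _ assms(4)]
      ext_boundary_subset_even_sites[OF assms(1)] assms(2) by auto
  then have "odd_occupied L \<sigma> = rhombus_core L l l \<eta>"
    using assms(5) odd_sites_Int_even_sites unfolding odd_region_def rhombus_def by blast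
  then show ?thesis using card_rhombus_core[OF assms(3)] by simp
qed

lemma hardcore_fill:
  assumes "even L" "2 \<le> L" "S \<subseteq> odd_sites L" "ext_boundary L S \<subseteq> E"
    "E \<subseteq> even_sites L"
  defines "\<tau> \<equiv> \<lambda>v. v \<in> S \<or> v \<in> even_sites L - E"
  shows "\<tau> \<in> hardcore L" "odd_occupied L \<tau> = S" "even_vacant L \<tau> = E"
proof -
  have "\<not> (\<tau> v \<and> \<tau> w)" if vw: "adj L v w" for v w
  proof
    assume "\<tau> v \<and> \<tau> w"
    then consider "v \<in> S" | "v \<in> even_sites L - E" unfolding \<tau>_def by blast
    then show False
    proof cases
      case 1
      then have "w \<in> E" "w \<in> even_sites L"
        using ext_boundary_memI[OF assms(1-3) 1 vw] assms(4) ext_boundary_subset_even_sites[OF assms(1-3)] by auto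
      then show False using \<open>\<tau> v
        \<and> \<tau> w\<close> assms(3) odd_sites_Int_even_sites unfolding \<tau>_def by blast
    next
      case 2
      then have "w \<in> odd_sites L" using adj_even_iff_odd[OF assms(1,2) vw] by blast
      then have "w \<in> S" using \<open>\<tau> v
        \<and> \<tau> w\<close> odd_sites_Int_even_sites unfolding \<tau>_def by blast
      then have "v \<in> E" using ext_boundary_memI[OF assms(1-3)] adj_commute[of L v w] vw assms(4) by blast
      then show False using 2 by blast
    qed
  qed
  moreover have "\<tau> v \<Longrightarrow> v \<in> sites L" for v
    using assms(3) unfolding \<tau>_def odd_sites_def even_sites_def by auto
  ultimately show "\<tau> \<in> hardcore L" unfolding hardcore_def by blast
  show "odd_occupied L \<tau> = S" "even_vacant L \<tau> = E"
    using assms(3,5) odd_sites_Int_even_sites unfolding \<tau>_def by auto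
qed

lemma card_even_sites:
  assumes "even L"
  shows "(L div 2)^2 \<le> card (even_sites L)"
proof -
  let ?f = "\<lambda>(a, b). (2 * a, 2 * b)" and ?Q = "{..<L div 2} \<times> {..<L div 2}"
  have "?f ` ?Q \<subseteq> even_sites L"
    using assms unfolding even_sites_def sites_def by auto
  moreover have "finite (even_sites L)" unfolding even_sites_def sites_def by simp
  ultimately have "card (?f ` ?Q) \<le> card (even_sites L)" by (rule card_mono[rotated])
  moreover have "inj_on ?f ?Q" by (rule inj_onI) auto
  then have "card (?f ` ?Q) = (L div 2)^2" by (simp add: card_image power2_eq_square)
  ultimately show ?thesis by simp
qed

lemma ex_rhombus_configuration:
  assumes "even L" "4 \<le> L" "1 \<le> l" "2 * l + 2 \<le> L"
  shows "\<exists>\<tau>\<in>hardcore L. real_area L \<tau> = 2 * l^2 + 2 * l + 1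
      \<and> card (odd_occupied L \<tau>) = l^2"
proof -
  let ?S = "rhombus_core L l l (1, 0)"
  have S: "?S \<subseteq> odd_sites L" "card ?S = l^2"
    using rhombus_core_subset_odd_sites[OF assms(1), of "(1, 0)"] card_rhombus_core[of l L] assms(2,4)
    by (auto simp: odd_sites_def sites_def)
  have N: "ext_boundary L ?S \<subseteq> even_sites L" "card (ext_boundary L ?S) \<le> (l + 1)^2"
    using ext_boundary_subset_even_sites[OF assms(1) _ S(1)] card_ext_boundary_rhombus_core assms(2) by auto
  have fin: "finite (even_sites L)" unfolding even_sites_def sites_def by simp
  have finN: "finite (ext_boundary L ?S)" using finite_subset[OF N(1) fin] .
  have "(l + 1)^2 \<le> (L div 2)^2" using assms(4) by (intro power_mono) auto
  then have "(l + 1)^2 \<le> card (even_sites L)"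
    using card_even_sites[OF assms(1)] by (rule le_trans)
  then have "(l + 1)^2 - card (ext_boundary L ?S) \<le> card (even_sites L - ext_boundary L ?S)"
    using card_Diff_subset[OF finN N(1)] by (simp add: diff_le_mono)
  then obtain T where T: "T \<subseteq> even_sites L - ext_boundary L ?S"
    "card T = (l + 1)^2 - card (ext_boundary L ?S)"
    by (rule obtain_subset_with_card_n)
  have finT: "finite T" using T(1) fin by (meson finite_Diff finite_subset)
  let ?E = "ext_boundary L ?S \<union> T"
  have "card ?E = card (ext_boundary L ?S) + card T"
    using T(1) by (intro card_Un_disjoint[OF finN finT]) blast
  then have E: "?E \<subseteq> even_sites L" "card ?E = (l + 1)^2"
    using T N by auto
  let ?\<tau> = "\<lambda>v. v \<in> ?S \<or> v \<in> even_sites L - ?E"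
  have "2 \<le> L" using assms(2) by simp
  note \<tau> = hardcore_fill[OF assms(1) this S(1) Un_upper1 E(1)]
  show ?thesis
  proof (rule bexI[OF _ \<tau>(1)])
    show "real_area L ?\<tau> = 2 * l^2 + 2 * l + 1 \<and> card (odd_occupied L ?\<tau>) = l^2"
      unfolding real_area_def \<tau>(2,3) S(2) E(2) by (simp add: power2_eq_square)
  qed
qed


lemma minimal_perimeter_iff:
  assumes "even L" "4 \<le> L" "1 \<le> l" "2 * l + 2 \<le> L"
    and "\<sigma> \<in> hardcore L" "real_area L \<sigma> = 2 * l^2 + 2 * l + 1"
  shows "(\<forall>\<tau>\<in>hardcore L. real_area L \<tau>
      = 2 * l^2 + 2 * l + 1 \<longrightarrow> perimeter L \<sigma> \<le> perimeter L \<tau>)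
    \<longleftrightarrow> card (odd_occupied L \<sigma>) = l^2"
proof
  assume min: "\<forall>\<tau>\<in>hardcore L. real_area L \<tau>
      = 2 * l^2 + 2 * l + 1 \<longrightarrow> perimeter L \<sigma> \<le> perimeter L \<tau>"
  obtain \<tau> where "\<tau> \<in> hardcore L" "real_area L \<tau> = 2 * l^2 + 2 * l + 1"
    "card (odd_occupied L \<tau>) = l^2"
    using ex_rhombus_configuration[OF assms(1-4)] by blast
  moreover from this min have "perimeter L \<sigma> \<le> perimeter L \<tau>" by blast
  ultimately have "l^2 \<le> card (odd_occupied L \<sigma>)"
    using perimeter_eq_area[OF assms(1,2,5)] perimeter_eq_area[OF assms(1,2) \<open>\<tau>
      \<in> hardcore L\<close>] assms(6)
    by linarith
  then show "card (odd_occupied L \<sigma>) = l^2"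
    using card_odd_occupied_le[OF assms] by simp
next
  assume "card (odd_occupied L \<sigma>) = l^2"
  show "\<forall>\<tau>\<in>hardcore L. real_area L \<tau> = 2 * l^2 + 2 * l + 1
      \<longrightarrow> perimeter L \<sigma> \<le> perimeter L \<tau>"
  proof (intro ballI impI)
    fix \<tau> assume \<tau>: "\<tau> \<in> hardcore L" "real_area L \<tau> = 2 * l^2 + 2 * l + 1"
    then show "perimeter L \<sigma> \<le> perimeter L \<tau>"
      using card_odd_occupied_le[OF assms(1-4) \<tau>] perimeter_eq_area[OF assms(1,2,5)]
        perimeter_eq_area[OF assms(1,2) \<tau>(1)] \<open>card (odd_occupied L \<sigma>) = l^2\<close> assms(6)
      by linarith
  qed
qed

lemma components_eq_singletonD: "components L A = {B} \<Longrightarrow> A = B"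
  using Union_components[of L A] by simp

theorem lemma3p8:
  fixes L l :: nat and \<sigma> :: "site \<Rightarrow> bool"
  assumes "L \<ge> 6" and "even L" and "1 \<le> l" and "2 * l < L"
    and "\<sigma> \<in> hardcore L" and "real_area L \<sigma> = 2 * l^2 + 2 * l + 1"
  shows "(\<forall>\<tau>\<in>hardcore L. real_area L \<tau> = 2 * l^2 + 2 * l + 1 \<longrightarrow>
            perimeter L \<sigma> \<le> perimeter L \<tau>)
         \<longleftrightarrow> (\<exists>\<eta>\<in>odd_sites L. components L (odd_region L \<sigma>)
           = {rhombus L l l \<eta>})"
proof -
  have L: "4 \<le> L" "2 * l + 2 \<le> L" using assms(1,2,4) by (auto elim!: evenE)
  note hyps = assms(2) L(1) assms(3) L(2) assms(5,6)
  have "(\<forall>\<tau>\<in>hardcore L. real_area L \<tau> = 2 * l^2 + 2 * l + 1 \<longrightarrow>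
            perimeter L \<sigma> \<le> perimeter L \<tau>)
      \<longleftrightarrow> card (odd_occupied L \<sigma>) = l^2"
    by (rule minimal_perimeter_iff[OF hyps])
  also have "\<dots> \<longleftrightarrow> (\<exists>\<eta>\<in>odd_sites L. odd_region L \<sigma>
      = rhombus L l l \<eta>)"
    using odd_region_eq_rhombus[OF hyps] card_odd_occupied_rhombus[OF assms(2) L(1) assms(4)]
    by blast
  also have "\<dots> \<longleftrightarrow> (\<exists>\<eta>\<in>odd_sites L. components L (odd_region L \<sigma>) = {rhombus L l l \<eta>})"
    using components_rhombus[OF assms(2) _ _ assms(3)] L(1)
      components_eq_singletonD[of L "odd_region L \<sigma>"]
    by auto
  finally show ?thesis .
qed

end
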